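(* There exist absolute constants $c_0,c,c',C>0$ such that the following holds. Let $k\ge 2$, $n\ge 1$ and $\varepsilon\in(0,1]$ with $\varepsilon\ge c_0 n^{-1/4}$. Let $P$ be a distribution on $[n]$ with $\mathrm{d_{TV}}(P,U_n)\ge\varepsilon$, and let $D_1,\dots,D_k$ be distributions on $[n]$ such that for an unknown set $\chi\subseteq[k]$, $D_i=P$ for $i\in\chi$ and $D_i=U_n$ for $i\in[k]\setminus\chi$. Then the $\mathtt{ESW\text{-}Tester}$ (with constants $c,c'$) outputs $\hat\chi=\chi$ with probability at least $8/9$, and its total sample complexity $s_1+ks_2$ is at most $C\frac{\sqrt{nk\log k}}{\varepsilon^2}$ if $n\ge \frac{k\log k}{\varepsilon^4}$, and at most $C\frac{k\log k}{\varepsilon^4}$ if $n\le\frac{k\log k}{\varepsilon^4}$.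
   Context: $U_n$ is the uniform distribution on $[n]$; $\mathrm{d_{TV}}$ is total variation distance. The $\mathtt{ESW\text{-}Tester}$ (with constants $c,c'$) is the following procedure, given $\varepsilon$, sample access to $P$ and to $D_1,\dots,D_k$: set $s_1=\min\!\big(n,\frac{\sqrt{nk\log k}}{\varepsilon^2}\big)$, $s_2=c\,\frac{n\log k}{s_1\varepsilon^4}$ (rounded up to integers), and $\tau=c'\,\frac{s_1\varepsilon^2}{n}$. Draw a multiset $\mathcal S$ of $s_1$ i.i.d. samples from $P$ and let $S$ be its set of distinct elements. For each $j\in[k]$, draw $s_2$ i.i.d. samples $X_1,\dots,X_{s_2}$ from $D_j$, compute $Z_j=\frac1{s_2}\sum_{t=1}^{s_2}\mathbb 1\{X_t\in S\}$, and put $j$ into $\hat\chi$ iff $Z_j\ge 1-(1-\frac1n)^{s_1}+2\tau$. Output $\hat\chi$. *)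

theory Defs
  imports "HOL-Probability.Probability"
begin

text \<open>Distributions on [n] = {1..n} are modelled as nat pmfs supported in {1..n}.\<close>

definition unif :: "nat \<Rightarrow> nat pmf" where
  "unif n = pmf_of_set {1..n}"

definition dTV :: "nat \<Rightarrow> nat pmf \<Rightarrow> nat pmf \<Rightarrow> real" where
  "dTV n P Q = (1/2) * (\<Sum>x\<in>{1..n}. \<bar>pmf P x - pmf Q x\<bar>)"

definition esw_s1 :: "nat \<Rightarrow> nat \<Rightarrow> real \<Rightarrow> nat" where
  "esw_s1 n k \<epsilon> = nat \<lceil>min (real n) (sqrt (real n * real k * ln (real k)) / \<epsilon>^2)\<rceil>"

definition esw_s2 :: "real \<Rightarrow> nat \<Rightarrow> nat \<Rightarrow> real \<Rightarrow> nat" where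
  "esw_s2 c n k \<epsilon> = nat \<lceil>c * real n * ln (real k) / (real (esw_s1 n k \<epsilon>) * \<epsilon>^4)\<rceil>"

definition esw_tau :: "real \<Rightarrow> nat \<Rightarrow> nat \<Rightarrow> real \<Rightarrow> real" where
  "esw_tau c' n k \<epsilon> = c' * real (esw_s1 n k \<epsilon>) * \<epsilon>^2 / real n"

definition esw_tester ::
  "real \<Rightarrow> real \<Rightarrow> nat \<Rightarrow> nat \<Rightarrow> real \<Rightarrow> nat pmf \<Rightarrow> (nat \<Rightarrow> nat pmf) \<Rightarrow> nat set pmf" where
  "esw_tester c c' n k \<epsilon> P D =
     (let s1 = esw_s1 n k \<epsilon>; s2 = esw_s2 c n k \<epsilon>; \<tau> = esw_tau c' n k \<epsilon>;
          thr = 1 - (1 - 1 / real n) ^ s1 + 2 * \<tau>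
      in do {
        xs \<leftarrow> replicate_pmf s1 P;
        Xs \<leftarrow> Pi_pmf {1..k} [] (\<lambda>j. replicate_pmf s2 (D j));
        return_pmf {j \<in> {1..k}.
          real (length (filter (\<lambda>x. x \<in> set xs) (Xs j))) / real s2 \<ge> thr}
      })"

end

theory Submission
  imports Defs
begin

(* Let F(p) = 1 - (1 - p)^s be the probability that s samples hit a point of mass p, and q = 1/n.
   Under U_n the set S of distinct first-stage samples has mass |S|/n; its expected size is at most
   n F(q) by concavity of F, so by Chebyshev |S| < n (F(q) + tau) with high probability.  Under P the
   expected mass of S is the sum of p F(p) over all points.  The map p -> p F(p) lies above its
   tangent at q on [0, 1] and is uniformly convex on [0, q]; as the tangent values sum to F(q), the
   expected mass exceeds F(q) by the total excess over the tangent, and the deficit of total size eps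
   below q that dTV(P, U_n) >= eps forces makes this excess of order s eps^2 / n.  Chebyshev, applied
   separately to light and heavy points, shows that the mass of S exceeds F(q) + 3 tau with high
   probability.  For such an S the threshold F(q) + 2 tau is at distance tau from the hit rates of S
   under P and under U_n, and a multiplicative Chernoff bound makes each of the k tests fail with
   probability at most k^-8. *)

lemma integrable_measure_pmf_bounded:
  fixes f :: "'a \<Rightarrow> real"
  assumes "\<And>x. \<bar>f x\<bar> \<le> B"
  shows "integrable (measure_pmf M) f"
  using assms by (intro measure_pmf.integrable_const_bound[where B = B]) auto

lemma prob_bind_pmf:
  "measure_pmf.prob (bind_pmf M f) A = (\<integral>x. measure_pmf.prob (f x) A \<partial>M)"
proof -
  have "ennreal (measure_pmf.prob (bind_pmf M f) A) = (\<integral>\<^sup>+x. ennreal (measure_pmf.prob (f x) A) \<partial>M)"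
    by (simp add: measure_pmf.emeasure_eq_measure[symmetric])
  also have "\<dots> = ennreal (\<integral>x. measure_pmf.prob (f x) A \<partial>M)"
    by (intro nn_integral_eq_integral integrable_measure_pmf_bounded[where B = 1]) auto
  finally show ?thesis by (simp add: integral_nonneg_AE)
qed

lemma prob_bind_pmf_ge:
  assumes "\<And>x. x \<in> set_pmf M \<Longrightarrow> x \<in> G \<Longrightarrow> a \<le> measure_pmf.prob (f x) A" and "0 \<le> a"
  shows "a * measure_pmf.prob M G \<le> measure_pmf.prob (bind_pmf M f) A"
proof -
  have "a * measure_pmf.prob M G = (\<integral>x. a * indicator G x \<partial>M)" by simp
  also have "\<dots> \<le> (\<integral>x. measure_pmf.prob (f x) A \<partial>M)"
    using assms
    by (intro integral_mono_AE integrable_measure_pmf_bounded[where B = "\<bar>a\<bar>"]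
        integrable_measure_pmf_bounded[where B = 1]) (auto simp: AE_measure_pmf_iff indicator_def)
  also have "\<dots> = measure_pmf.prob (bind_pmf M f) A" by (simp add: prob_bind_pmf)
  finally show ?thesis .
qed

lemma measure_pmf_prob_mono_set_pmf:
  assumes "\<And>x. x \<in> set_pmf M \<Longrightarrow> x \<in> A \<Longrightarrow> x \<in> B"
  shows "measure_pmf.prob M A \<le> measure_pmf.prob M B"
  using assms by (intro measure_pmf.finite_measure_mono_AE) (auto simp: AE_measure_pmf_iff)

lemma prob_replicate_pmf_disjoint:
  "measure_pmf.prob (replicate_pmf s P) {xs. set xs \<inter> A = {}} = (1 - measure_pmf.prob P A) ^ s"
proof (induction s)
  case (Suc s)
  let ?E = "{xs. set xs \<inter> A = {}}"
  have "measure_pmf.prob (replicate_pmf (Suc s) P) ?E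
      = (\<integral>x. measure_pmf.prob (replicate_pmf s P) ((#) x -` ?E) \<partial>P)"
    by (simp add: prob_bind_pmf map_pmf_def[symmetric])
  also have "\<dots> = (\<integral>x. indicator (- A) x * measure_pmf.prob (replicate_pmf s P) ?E \<partial>P)"
    by (intro Bochner_Integration.integral_cong) (auto simp: indicator_def)
  also have "\<dots> = measure_pmf.prob P (- A) * measure_pmf.prob (replicate_pmf s P) ?E"
    by simp
  also have "measure_pmf.prob P (- A) = 1 - measure_pmf.prob P A"
    by (simp add: measure_pmf.prob_compl[symmetric] Compl_eq_Diff_UNIV)
  finally show ?case using Suc by simp
qed simp

section \<open>Coverage probabilities\<close>

definition cover_prob :: "nat \<Rightarrow> real \<Rightarrow> real" where
  "cover_prob s p = 1 - (1 - p) ^ s"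

lemma prob_replicate_pmf_mem:
  "measure_pmf.prob (replicate_pmf s P) {xs. x \<in> set xs} = cover_prob s (pmf P x)"
proof -
  have "measure_pmf.prob (replicate_pmf s P) {xs. x \<in> set xs}
     = 1 - measure_pmf.prob (replicate_pmf s P) {xs. set xs \<inter> {x} = {}}"
    by (subst measure_pmf.prob_compl[symmetric]) (auto intro!: arg_cong[where f = "measure_pmf.prob _"])
  moreover have "{xs. set xs \<inter> {x} = {}} = {xs. x \<notin> set xs}" by auto
  ultimately show ?thesis
    using prob_replicate_pmf_disjoint[of s P "{x}"] by (simp add: measure_pmf_single cover_prob_def)
qed

lemma prob_replicate_pmf_mem2_le:
  assumes "x \<noteq> y"
  shows "measure_pmf.prob (replicate_pmf s P) {xs. x \<in> set xs \<and> y \<in> set xs}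
     \<le> cover_prob s (pmf P x) * cover_prob s (pmf P y)"
proof -
  let ?M = "replicate_pmf s P"
  let ?X = "{xs. x \<in> set xs}" and ?Y = "{xs. y \<in> set xs}"
  have "measure_pmf.prob ?M (?X \<union> ?Y) = 1 - measure_pmf.prob ?M {xs. set xs \<inter> {x, y} = {}}"
    by (subst measure_pmf.prob_compl[symmetric]) (auto intro!: arg_cong[where f = "measure_pmf.prob _"])
  moreover have xy: "measure_pmf.prob P {x, y} = pmf P x + pmf P y"
    using assms by (simp add: measure_pmf.finite_measure_eq_sum_singleton measure_pmf_single)
  ultimately have "measure_pmf.prob ?M (?X \<union> ?Y) = 1 - (1 - pmf P x - pmf P y) ^ s"
    using prob_replicate_pmf_disjoint[of s P "{x, y}"] by (simp add: algebra_simps)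
  moreover have "measure_pmf.prob ?M (?X \<union> ?Y)
      = measure_pmf.prob ?M ?X + measure_pmf.prob ?M ?Y - measure_pmf.prob ?M (?X \<inter> ?Y)"
    by (rule measure_Un3) (auto simp: fmeasurable_def measure_pmf.emeasure_eq_measure)
  moreover have "(1 - pmf P x - pmf P y) ^ s \<le> (1 - pmf P x) ^ s * (1 - pmf P y) ^ s"
    unfolding power_mult_distrib[symmetric] using xy measure_pmf.prob_le_1[of P "{x, y}"]
    by (intro power_mono) (auto simp: algebra_simps)
  ultimately show ?thesis
    by (simp add: prob_replicate_pmf_mem cover_prob_def Int_def algebra_simps)
qed

lemma cover_prob_nonneg: "0 \<le> p \<Longrightarrow> p \<le> 1 \<Longrightarrow> 0 \<le> cover_prob s p"
  unfolding cover_prob_def by (simp add: power_le_one)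

lemma cover_prob_le_1: "0 \<le> p \<Longrightarrow> p \<le> 1 \<Longrightarrow> cover_prob s p \<le> 1"
  unfolding cover_prob_def by simp

lemma cover_prob_le: "0 \<le> p \<Longrightarrow> p \<le> 1 \<Longrightarrow> cover_prob s p \<le> real s * p"
  unfolding cover_prob_def using Bernoulli_inequality[of "-p" s] by simp

lemma power_one_minus_le_inverse:
  fixes p :: real
  assumes "0 \<le> p" "p \<le> 1"
  shows "(1 - p) ^ s \<le> 1 / (1 + real s * p)"
proof -
  have "(1 - p) ^ s * (1 + real s * p) \<le> (1 - p) ^ s * (1 + p) ^ s"
    using Bernoulli_inequality[of p s] assms by (intro mult_left_mono) auto
  also have "\<dots> = (1 - p\<^sup>2) ^ s"
    by (simp add: power_mult_distrib[symmetric] power2_eq_square algebra_simps)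
  also have "\<dots> \<le> 1" using assms by (intro power_le_one) (auto simp: power_le_one)
  finally show ?thesis using assms by (simp add: field_simps add_pos_nonneg)
qed

lemma cover_prob_ge:
  assumes "0 \<le> p" "p \<le> 1"
  shows "real s * p / (1 + real s * p) \<le> cover_prob s p"
proof -
  have "0 < 1 + real s * p" using assms by (simp add: add_pos_nonneg)
  then have "real s * p / (1 + real s * p) = 1 - 1 / (1 + real s * p)" by (simp add: field_simps)
  then show ?thesis unfolding cover_prob_def using power_one_minus_le_inverse[OF assms] by simp
qed

lemma cover_prob_le_tangent:
  assumes "0 \<le> p" "p \<le> 1" "0 \<le> q" "q < 1"
  shows "cover_prob s p \<le> cover_prob s q + real s * (1 - q) ^ (s - 1) * (p - q)"
proof (cases "s = 0")
  case False
  let ?x = "1 - q" and ?y = "1 - p"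
  have x0: "?x > 0" using assms by simp
  have "?x ^ s * (1 + real s * (?y / ?x - 1)) \<le> ?x ^ s * (?y / ?x) ^ s"
    using Bernoulli_inequality[of "?y / ?x - 1" s] assms x0 by (intro mult_left_mono) auto
  also have "\<dots> = ?y ^ s" using x0 by (simp add: power_divide)
  also have "?x ^ s * (1 + real s * (?y / ?x - 1)) = ?x ^ s + real s * ?x ^ (s - 1) * (?y - ?x)"
    using x0 False by (simp add: power_eq_if field_simps)
  finally show ?thesis unfolding cover_prob_def by (simp add: algebra_simps)
qed (simp add: cover_prob_def)

lemma cover_variance_le_div:
  assumes "0 \<le> p" "p \<le> 1" "1 \<le> s"
  shows "p\<^sup>2 * (cover_prob s p * (1 - cover_prob s p)) \<le> p / real s"
proof -
  have "cover_prob s p * (1 - cover_prob s p) \<le> 1 - cover_prob s p"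
    using assms cover_prob_nonneg cover_prob_le_1 by (simp add: mult_left_le_one_le)
  also have "\<dots> \<le> 1 / (1 + real s * p)"
    unfolding cover_prob_def using power_one_minus_le_inverse assms by simp
  finally have "p\<^sup>2 * (cover_prob s p * (1 - cover_prob s p)) \<le> p\<^sup>2 * (1 / (1 + real s * p))"
    by (intro mult_left_mono) auto
  also have "\<dots> \<le> p / real s"
    using assms by (simp add: field_simps power2_eq_square add_pos_nonneg)
  finally show ?thesis .
qed

lemma cover_variance_le_cube:
  assumes "0 \<le> p" "p \<le> 1"
  shows "p\<^sup>2 * (cover_prob s p * (1 - cover_prob s p)) \<le> real s * p ^ 3"
proof -
  have "cover_prob s p * (1 - cover_prob s p) \<le> cover_prob s p"
    using cover_prob_nonneg[OF assms] cover_prob_le_1[OF assms] by (intro mult_left_le) auto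
  also have "\<dots> \<le> real s * p" using cover_prob_le[OF assms] .
  finally have "cover_prob s p * (1 - cover_prob s p) \<le> real s * p" .
  then have "p\<^sup>2 * (cover_prob s p * (1 - cover_prob s p)) \<le> p\<^sup>2 * (real s * p)"
    by (intro mult_left_mono) auto
  then show ?thesis by (simp add: power3_eq_cube power2_eq_square algebra_simps)
qed

lemma
  fixes P :: "'a pmf" and w :: "'a \<Rightarrow> real"
  assumes X: "finite X" and w: "\<And>x. x \<in> X \<Longrightarrow> 0 \<le> w x"
  shows expectation_sum_sampled:
      "measure_pmf.expectation (replicate_pmf s P) (\<lambda>xs. \<Sum>x\<in>X \<inter> set xs. w x)
         = (\<Sum>x\<in>X. w x * cover_prob s (pmf P x))" (is "?E = ?c")
    and variance_sum_sampled_le: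
      "measure_pmf.variance (replicate_pmf s P) (\<lambda>xs. \<Sum>x\<in>X \<inter> set xs. w x)
         \<le> (\<Sum>x\<in>X. (w x)\<^sup>2 * (cover_prob s (pmf P x) * (1 - cover_prob s (pmf P x))))" (is "?Var \<le> ?V")
proof -
  let ?M = "replicate_pmf s P"
  let ?I = "\<lambda>x. indicator {xs. x \<in> set xs} :: 'a list \<Rightarrow> real"
  let ?F = "\<lambda>x. cover_prob s (pmf P x)"
  define Y where "Y xs = (\<Sum>x\<in>X \<inter> set xs. w x)" for xs
  have Y: "Y xs = (\<Sum>x\<in>X. w x * ?I x xs)" for xs
    unfolding Y_def using X by (simp add: sum.inter_restrict indicator_def)
  have int_I: "integrable (measure_pmf ?M) (?I x)" for x
    by (rule integrable_measure_pmf_bounded[where B = 1]) simp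
  have int_II: "integrable (measure_pmf ?M) (\<lambda>xs. ?I x xs * ?I y xs)" for x y
    by (rule integrable_measure_pmf_bounded[where B = 1]) (simp add: indicator_def)
  show EY: "?E = ?c"
    unfolding Y_def[symmetric] Y using int_I by (simp add: prob_replicate_pmf_mem)
  have EII: "measure_pmf.expectation ?M (\<lambda>xs. ?I x xs * ?I y xs) \<le> (if x = y then ?F x else ?F x * ?F y)"
    for x y
  proof (cases "x = y")
    case True
    then show ?thesis by (simp add: indicator_inter_arith[symmetric] prob_replicate_pmf_mem)
  next
    case False
    then show ?thesis
      using prob_replicate_pmf_mem2_le[OF False] by (simp add: indicator_inter_arith[symmetric] Int_def)
  qed
  have "measure_pmf.expectation ?M (\<lambda>xs. (Y xs)\<^sup>2)
      = (\<Sum>x\<in>X. \<Sum>y\<in>X. w x * w y * measure_pmf.expectation ?M (\<lambda>xs. ?I x xs * ?I y xs))"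
    unfolding Y power2_eq_square sum_product using int_II
    by (simp add: Bochner_Integration.integral_sum algebra_simps)
  also have "\<dots> \<le> (\<Sum>x\<in>X. \<Sum>y\<in>X. w x * w y * (if x = y then ?F x else ?F x * ?F y))"
    using w EII by (intro sum_mono mult_left_mono) auto
  also have "\<dots> = (\<Sum>x\<in>X. \<Sum>y\<in>X. w x * w y * (?F x * ?F y)
      + (if x = y then (w x)\<^sup>2 * (?F x * (1 - ?F x)) else 0))"
    by (intro sum.cong refl) (auto simp: algebra_simps power2_eq_square)
  also have "\<dots> = ?c\<^sup>2 + ?V"
    unfolding power2_eq_square sum.distrib sum_product
    using X by (simp add: algebra_simps if_distrib cong: if_cong)
  finally have EY2: "measure_pmf.expectation ?M (\<lambda>xs. (Y xs)\<^sup>2) \<le> ?c\<^sup>2 + ?V" .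
  have int_Y: "integrable (measure_pmf ?M) Y"
    unfolding Y using int_I by simp
  have int_Y2: "integrable (measure_pmf ?M) (\<lambda>xs. (Y xs)\<^sup>2)"
    unfolding Y power2_eq_square sum_product using int_II by (simp add: algebra_simps)
  have "?Var = measure_pmf.expectation ?M (\<lambda>xs. (Y xs)\<^sup>2) - ?c\<^sup>2"
    using measure_pmf.variance_eq[OF int_Y int_Y2] EY by (simp add: Y_def)
  then show "?Var \<le> ?V" using EY2 by simp
qed

lemma
  fixes P :: "'a pmf" and w :: "'a \<Rightarrow> real" and s :: nat
  assumes X: "finite X" and w: "\<And>x. x \<in> X \<Longrightarrow> 0 \<le> w x" and t: "0 < t"
  defines "c \<equiv> \<Sum>x\<in>X. w x * cover_prob s (pmf P x)"
    and "V \<equiv> \<Sum>x\<in>X. (w x)\<^sup>2 * (cover_prob s (pmf P x) * (1 - cover_prob s (pmf P x)))"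
  shows prob_sum_sampled_le: "measure_pmf.prob (replicate_pmf s P) {xs. (\<Sum>x\<in>X \<inter> set xs. w x) \<le> c - t} \<le> V / t\<^sup>2"
    and prob_sum_sampled_ge: "measure_pmf.prob (replicate_pmf s P) {xs. c + t \<le> (\<Sum>x\<in>X \<inter> set xs. w x)} \<le> V / t\<^sup>2"
proof -
  let ?M = "replicate_pmf s P"
  define Y where "Y xs = (\<Sum>x\<in>X \<inter> set xs. w x)" for xs
  have "integrable (measure_pmf ?M) (\<lambda>xs. (Y xs)\<^sup>2)"
  proof (rule integrable_measure_pmf_bounded)
    have "\<bar>Y xs\<bar> \<le> (\<Sum>x\<in>X. w x)" for xs
      unfolding Y_def using X w sum_mono2[of X "X \<inter> set xs" w] sum_nonneg[of "X \<inter> set xs" w]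
      by auto
    then show "\<bar>(Y xs)\<^sup>2\<bar> \<le> (\<Sum>x\<in>X. w x)\<^sup>2" for xs
      by (simp add: abs_le_square_iff[symmetric]) (meson abs_ge_self order_trans)
  qed
  then have "measure_pmf.prob ?M {xs. t \<le> \<bar>Y xs - c\<bar>} \<le> measure_pmf.variance ?M Y / t\<^sup>2"
    using measure_pmf.Chebyshev_inequality[where M = ?M and f = Y and a = t] t
      expectation_sum_sampled[OF X, of w s P] w
    unfolding Y_def c_def by simp
  also have "measure_pmf.variance ?M Y \<le> V"
    unfolding Y_def c_def V_def by (rule variance_sum_sampled_le[OF X]) (rule w)
  finally have dev: "measure_pmf.prob ?M {xs. t \<le> \<bar>Y xs - c\<bar>} \<le> V / t\<^sup>2"
    by (simp add: divide_right_mono)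
  show "measure_pmf.prob ?M {xs. Y xs \<le> c - t} \<le> V / t\<^sup>2"
    by (rule order_trans[OF measure_pmf.finite_measure_mono dev]) auto
  show "measure_pmf.prob ?M {xs. c + t \<le> Y xs} \<le> V / t\<^sup>2"
    by (rule order_trans[OF measure_pmf.finite_measure_mono dev]) auto
qed

lemma sum_cover_prob_le:
  fixes P :: "'a pmf"
  assumes X: "finite X" "2 \<le> card X" and supp: "set_pmf P \<subseteq> X"
  defines "n \<equiv> real (card X)"
  shows "(\<Sum>x\<in>X. cover_prob s (pmf P x)) \<le> n * cover_prob s (1 / n)"
proof -
  have "0 \<le> 1 / n" "1 / n < 1" using X by (auto simp: n_def)
  then have "(\<Sum>x\<in>X. cover_prob s (pmf P x))
      \<le> (\<Sum>x\<in>X. cover_prob s (1 / n) + real s * (1 - 1 / n) ^ (s - 1) * (pmf P x - 1 / n))"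
    using cover_prob_le_tangent[of "pmf P _" "1 / n" s] by (intro sum_mono) (simp add: pmf_le_1)
  also have "\<dots> = n * cover_prob s (1 / n)"
    using X supp sum_pmf_eq_1[of X P]
    by (auto simp: n_def sum.distrib sum_subtractf sum_distrib_left[symmetric])
  finally show ?thesis .
qed

lemma prob_card_set_replicate_pmf_ge:
  fixes P :: "'a pmf"
  assumes X: "finite X" "2 \<le> card X" and supp: "set_pmf P \<subseteq> X" and t: "0 < t"
  defines "n \<equiv> real (card X)"
  shows "measure_pmf.prob (replicate_pmf s P) {xs. n * cover_prob s (1 / n) + t \<le> real (card (set xs))}
      \<le> real s / t\<^sup>2"
proof -
  let ?F = "\<lambda>x. cover_prob s (pmf P x)"
  have "(\<Sum>x\<in>X. 1\<^sup>2 * (?F x * (1 - ?F x))) \<le> (\<Sum>x\<in>X. real s * pmf P x)"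
  proof (intro sum_mono)
    fix x
    have "?F x * (1 - ?F x) \<le> ?F x"
      using cover_prob_nonneg cover_prob_le_1 by (intro mult_left_le) (auto simp: pmf_le_1)
    also have "\<dots> \<le> real s * pmf P x" by (intro cover_prob_le) (auto simp: pmf_le_1)
    finally show "1\<^sup>2 * (?F x * (1 - ?F x)) \<le> real s * pmf P x" by simp
  qed
  also have "\<dots> = real s" using X supp sum_pmf_eq_1[of X P] by (simp add: sum_distrib_left[symmetric])
  finally have var: "(\<Sum>x\<in>X. 1\<^sup>2 * (?F x * (1 - ?F x))) \<le> real s" .
  have "measure_pmf.prob (replicate_pmf s P) {xs. n * cover_prob s (1 / n) + t \<le> real (card (set xs))}
      \<le> measure_pmf.prob (replicate_pmf s P) {xs. (\<Sum>x\<in>X. 1 * ?F x) + t \<le> (\<Sum>x\<in>X \<inter> set xs. 1)}"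
  proof (rule measure_pmf_prob_mono_set_pmf)
    fix xs assume "xs \<in> set_pmf (replicate_pmf s P)"
      "xs \<in> {xs. n * cover_prob s (1 / n) + t \<le> real (card (set xs))}"
    moreover have "X \<inter> set xs = set xs" if "xs \<in> set_pmf (replicate_pmf s P)"
      using that supp by (auto simp: set_replicate_pmf)
    ultimately show "xs \<in> {xs. (\<Sum>x\<in>X. 1 * ?F x) + t \<le> (\<Sum>x\<in>X \<inter> set xs. 1)}"
      using sum_cover_prob_le[OF X supp, of s] by (simp add: n_def)
  qed
  also have "\<dots> \<le> (\<Sum>x\<in>X. 1\<^sup>2 * (?F x * (1 - ?F x))) / t\<^sup>2"
    using X t by (intro prob_sum_sampled_ge) auto
  also have "\<dots> \<le> real s / t\<^sup>2"
    using var by (intro divide_right_mono) auto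
  finally show ?thesis .
qed

section \<open>Chernoff bounds for hit counts\<close>

definition hits :: "'a set \<Rightarrow> 'a list \<Rightarrow> nat" where
  "hits S xs = length (filter (\<lambda>x. x \<in> S) xs)"

lemma hits_mgf_base_nonneg: "0 \<le> 1 + measure_pmf.prob D S * (exp l - 1)"
proof (cases "0 \<le> l")
  case False
  have "measure_pmf.prob D S * (1 - exp l) \<le> 1 * 1"
    using False by (intro mult_mono) auto
  then show ?thesis by (simp add: algebra_simps)
qed simp

lemma nn_integral_exp_hits:
  "(\<integral>\<^sup>+xs. ennreal (exp (l * real (hits S xs))) \<partial>replicate_pmf m D)
     = ennreal ((1 + measure_pmf.prob D S * (exp l - 1)) ^ m)"
proof (induction m)
  case (Suc m)
  let ?b = "1 + measure_pmf.prob D S * (exp l - 1)"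
  let ?a = "\<lambda>x. exp (l * indicator S x)"
  have "(\<integral>\<^sup>+x. ennreal (?a x) \<partial>D) = ennreal (\<integral>x. 1 + (exp l - 1) * indicator S x \<partial>D)"
    by (subst nn_integral_eq_integral[symmetric])
      (auto intro!: integrable_measure_pmf_bounded[where B = "exp \<bar>l\<bar>"] nn_integral_cong
        simp: indicator_def)
  also have "(\<integral>x. 1 + (exp l - 1) * indicator S x \<partial>D) = (\<integral>x. 1 \<partial>D) + (\<integral>x. (exp l - 1) * indicator S x \<partial>D)"
    by (rule Bochner_Integration.integral_add)
      (auto intro!: integrable_measure_pmf_bounded[where B = 1])
  also have "\<dots> = ?b" by (simp add: mult.commute)
  finally have base: "(\<integral>\<^sup>+x. ennreal (?a x) \<partial>D) = ennreal ?b" .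
  have "ennreal (exp (l * real (hits S (x # xs)))) = ennreal (?a x) * ennreal (exp (l * real (hits S xs)))"
    for x xs by (simp add: hits_def ennreal_mult[symmetric] exp_add[symmetric] indicator_def algebra_simps)
  then have "(\<integral>\<^sup>+xs. ennreal (exp (l * real (hits S xs))) \<partial>replicate_pmf (Suc m) D)
      = (\<integral>\<^sup>+x. ennreal (?a x) * ennreal (?b ^ m) \<partial>D)"
    by (simp add: nn_integral_return nn_integral_cmult Suc)
  also have "\<dots> = ennreal ?b * ennreal (?b ^ m)"
    by (simp add: nn_integral_multc base)
  also have "\<dots> = ennreal (?b ^ Suc m)"
    by (simp add: ennreal_mult[symmetric] hits_mgf_base_nonneg)
  finally show ?case .
qed (simp add: hits_def)

lemma integrable_exp_hits:
  "integrable (measure_pmf (replicate_pmf m D)) (\<lambda>xs. exp (l * real (hits S xs)))"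
proof (rule measure_pmf.integrable_const_bound[where B = "exp (\<bar>l\<bar> * real m)"])
  have "\<bar>l * real (hits S xs)\<bar> \<le> \<bar>l\<bar> * real m" if "length xs = m" for xs :: "'a list"
    using that length_filter_le[of "\<lambda>x. x \<in> S" xs]
    by (simp add: hits_def abs_mult mult_left_mono)
  then show "AE xs in measure_pmf (replicate_pmf m D). norm (exp (l * real (hits S xs))) \<le> exp (\<bar>l\<bar> * real m)"
    by (auto simp: AE_measure_pmf_iff set_replicate_pmf abs_le_iff)
qed simp

lemma expectation_exp_hits:
  "measure_pmf.expectation (replicate_pmf m D) (\<lambda>xs. exp (l * real (hits S xs)))
     = (1 + measure_pmf.prob D S * (exp l - 1)) ^ m"
proof -
  have "ennreal (measure_pmf.expectation (replicate_pmf m D) (\<lambda>xs. exp (l * real (hits S xs))))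
     = ennreal ((1 + measure_pmf.prob D S * (exp l - 1)) ^ m)"
    by (subst nn_integral_eq_integral[symmetric]) (auto simp: integrable_exp_hits nn_integral_exp_hits)
  then show ?thesis by (simp add: integral_nonneg_AE hits_mgf_base_nonneg)
qed

lemma one_plus_power_le_exp:
  fixes y :: real
  assumes "0 \<le> 1 + y"
  shows "(1 + y) ^ m \<le> exp (real m * y)"
proof -
  have "(1 + y) ^ m \<le> (exp y) ^ m"
    using assms by (intro power_mono) (auto simp: add.commute)
  then show ?thesis by (simp add: exp_of_nat_mult[symmetric])
qed

lemma prob_hits_ge:
  assumes "measure_pmf.prob D S \<le> p" and t: "0 < t" "t \<le> p"
  shows "measure_pmf.prob (replicate_pmf m D) {xs. real m * (p + t) \<le> real (hits S xs)}
      \<le> exp (- real m * t\<^sup>2 / (4 * p))"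
proof -
  define l where "l = t / (2 * p)"
  have p: "0 < p" using t by simp
  have l: "0 < l" "l \<le> 1" using t p by (auto simp: l_def field_simps)
  let ?a = "real m * (p + t)"
  have "measure_pmf.prob (replicate_pmf m D) {xs. ?a \<le> real (hits S xs)}
      \<le> exp (- l * ?a) * (1 + measure_pmf.prob D S * (exp l - 1)) ^ m"
    using measure_pmf.Chernoff_ineq_ge[of l "replicate_pmf m D" UNIV "\<lambda>xs. real (hits S xs)" ?a] l
    by (simp add: set_integrable_def set_lebesgue_integral_def integrable_exp_hits expectation_exp_hits)
  also have "\<dots> \<le> exp (- l * ?a) * exp (real m * (measure_pmf.prob D S * (exp l - 1)))"
    by (intro mult_left_mono one_plus_power_le_exp hits_mgf_base_nonneg) simp
  also have "\<dots> \<le> exp (- l * ?a) * exp (real m * (p * (l + l\<^sup>2)))"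
  proof -
    have "exp l - 1 \<le> l + l\<^sup>2" using exp_bound[of l] l by simp
    then have "measure_pmf.prob D S * (exp l - 1) \<le> p * (l + l\<^sup>2)"
      using assms l by (intro mult_mono) auto
    then show ?thesis by (intro mult_left_mono) (auto intro!: mult_left_mono)
  qed
  also have "\<dots> = exp (- real m * t\<^sup>2 / (4 * p))"
    using p by (simp add: exp_add[symmetric] l_def power2_eq_square field_simps)
  finally show ?thesis .
qed

lemma prob_hits_le:
  assumes "p \<le> measure_pmf.prob D S" and p: "0 < p" and t: "0 \<le> t"
  shows "measure_pmf.prob (replicate_pmf m D) {xs. real (hits S xs) \<le> real m * (p - t)}
      \<le> exp (- real m * t\<^sup>2 / (4 * p))"
proof (cases "t = 0")
  case False
  define l where "l = t / (2 * p)"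
  have l: "0 < l" using t p False by (auto simp: l_def)
  let ?a = "real m * (p - t)"
  have "measure_pmf.prob (replicate_pmf m D) {xs. real (hits S xs) \<le> ?a}
      \<le> exp (l * ?a) * (1 + measure_pmf.prob D S * (exp (- l) - 1)) ^ m"
    using measure_pmf.Chernoff_ineq_le[of l "replicate_pmf m D" UNIV "\<lambda>xs. real (hits S xs)" ?a] l
      integrable_exp_hits[of m D "- l" S] expectation_exp_hits[of m D "- l" S]
    by (simp add: set_integrable_def set_lebesgue_integral_def)
  also have "\<dots> \<le> exp (l * ?a) * exp (real m * (measure_pmf.prob D S * (exp (- l) - 1)))"
    by (intro mult_left_mono one_plus_power_le_exp hits_mgf_base_nonneg) simp
  also have "\<dots> \<le> exp (l * ?a) * exp (real m * (p * (- l + l\<^sup>2)))"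
  proof -
    have "exp (- l) * (1 + l) \<le> exp (- l) * exp l"
      by (intro mult_left_mono) (auto simp: add.commute)
    then have "exp (- l) \<le> 1 / (1 + l)" using l by (simp add: field_simps exp_minus)
    also have "1 / (1 + l) \<le> 1 - l + l\<^sup>2"
      using l by (simp add: field_simps power2_eq_square)
    finally have e: "exp (- l) - 1 \<le> - l + l\<^sup>2" by simp
    have "measure_pmf.prob D S * (exp (- l) - 1) \<le> p * (exp (- l) - 1)"
      using assms l by (intro mult_right_mono_neg) auto
    also have "\<dots> \<le> p * (- l + l\<^sup>2)"
      using e p by (intro mult_left_mono) auto
    finally show ?thesis by (intro mult_left_mono) (auto intro!: mult_left_mono)
  qed
  also have "\<dots> = exp (- real m * t\<^sup>2 / (4 * p))"
    using p by (simp add: exp_add[symmetric] l_def power2_eq_square field_simps)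
  finally show ?thesis .
qed (use measure_pmf.prob_le_1 in simp)

lemma prob_hits_rate_below:
  assumes "p \<le> measure_pmf.prob D S" "0 < p" "0 < t" "thr \<le> p - t" "0 < m"
  shows "measure_pmf.prob (replicate_pmf m D) {ys. real (hits S ys) / real m < thr}
    \<le> exp (- real m * t\<^sup>2 / (4 * p))"
proof -
  have "measure_pmf.prob (replicate_pmf m D) {ys. real (hits S ys) / real m < thr}
      \<le> measure_pmf.prob (replicate_pmf m D) {ys. real (hits S ys) \<le> real m * (p - t)}"
    using assms mult_left_mono[of thr "p - t" "real m"]
    by (intro measure_pmf.finite_measure_mono) (auto simp: field_simps)
  also have "\<dots> \<le> exp (- real m * t\<^sup>2 / (4 * p))"
    using assms by (intro prob_hits_le) auto
  finally show ?thesis .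
qed

lemma prob_hits_rate_above:
  assumes "measure_pmf.prob D S \<le> p" "0 < t" "t \<le> p" "p + t \<le> thr" "0 < m"
  shows "measure_pmf.prob (replicate_pmf m D) {ys. thr \<le> real (hits S ys) / real m}
    \<le> exp (- real m * t\<^sup>2 / (4 * p))"
proof -
  have "measure_pmf.prob (replicate_pmf m D) {ys. thr \<le> real (hits S ys) / real m}
      \<le> measure_pmf.prob (replicate_pmf m D) {ys. real m * (p + t) \<le> real (hits S ys)}"
    using assms mult_left_mono[of "p + t" thr "real m"]
    by (intro measure_pmf.finite_measure_mono) (auto simp: field_simps)
  also have "\<dots> \<le> exp (- real m * t\<^sup>2 / (4 * p))"
    using assms by (intro prob_hits_ge) auto
  finally show ?thesis .
qed

lemma prob_threshold_tests_exact:
  fixes D :: "'i \<Rightarrow> 'a pmf"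
  assumes J: "finite J" and chi: "chi \<subseteq> J"
    and high: "\<And>j. j \<in> chi \<Longrightarrow> pl \<le> measure_pmf.prob (D j) S"
    and low: "\<And>j. j \<in> J - chi \<Longrightarrow> measure_pmf.prob (D j) S \<le> pu"
    and t: "0 < t" "t \<le> pu" and thr: "pu + t \<le> thr" "thr \<le> pl - t" and m: "0 < m"
    and \<delta>: "exp (- real m * t\<^sup>2 / (4 * pu)) \<le> \<delta>" "exp (- real m * t\<^sup>2 / (4 * pl)) \<le> \<delta>"
  shows "1 - real (card J) * \<delta> \<le> measure_pmf.prob (Pi_pmf J dflt (\<lambda>j. replicate_pmf m (D j)))
           {Xs. {j\<in>J. thr \<le> real (hits S (Xs j)) / real m} = chi}"
proof -
  let ?M = "Pi_pmf J dflt (\<lambda>j. replicate_pmf m (D j))"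
  define wrong where "wrong j ys \<longleftrightarrow> (j \<in> chi \<longleftrightarrow> real (hits S ys) / real m < thr)" for j ys
  have "0 < pl" using t thr by simp
  have wrong_j: "measure_pmf.prob (replicate_pmf m (D j)) {ys. wrong j ys} \<le> \<delta>" if "j \<in> J" for j
    using prob_hits_rate_below[OF high \<open>0 < pl\<close> t(1) thr(2) m, of j] prob_hits_rate_above[OF low t thr(1) m, of j]
      that \<delta> by (cases "j \<in> chi") (auto simp: wrong_def not_less)
  have "- {Xs. {j\<in>J. thr \<le> real (hits S (Xs j)) / real m} = chi} \<subseteq> (\<Union>j\<in>J. {Xs. wrong j (Xs j)})"
    using chi by (auto simp: wrong_def not_less)
  then have "measure_pmf.prob ?M (- {Xs. {j\<in>J. thr \<le> real (hits S (Xs j)) / real m} = chi})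
      \<le> measure_pmf.prob ?M (\<Union>j\<in>J. {Xs. wrong j (Xs j)})"
    by (intro measure_pmf.finite_measure_mono) auto
  also have "\<dots> \<le> (\<Sum>j\<in>J. measure_pmf.prob ?M {Xs. wrong j (Xs j)})"
    using J by (intro measure_pmf.finite_measure_subadditive_finite) auto
  also have "\<dots> = (\<Sum>j\<in>J. measure_pmf.prob (replicate_pmf m (D j)) {ys. wrong j ys})"
  proof (intro sum.cong refl)
    fix j assume "j \<in> J"
    then have "map_pmf (\<lambda>Xs. Xs j) ?M = replicate_pmf m (D j)"
      using J by (simp add: Pi_pmf_component)
    then show "measure_pmf.prob ?M {Xs. wrong j (Xs j)} = measure_pmf.prob (replicate_pmf m (D j)) {ys. wrong j ys}"
      by (metis measure_map_pmf vimage_Collect_eq)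
  qed
  also have "\<dots> \<le> real (card J) * \<delta>"
    using sum_mono[of J _ "\<lambda>_. \<delta>", OF wrong_j] by simp
  finally show ?thesis
    using measure_pmf.prob_compl[of "{Xs. {j\<in>J. thr \<le> real (hits S (Xs j)) / real m} = chi}" ?M]
    by (simp add: Compl_eq_Diff_UNIV)
qed

section \<open>The excess of \<open>p * cover_prob s p\<close> over its tangent\<close>

text \<open>\<open>p * cover_prob s p\<close> is the expected contribution of a point of mass \<open>p\<close> to the \<open>P\<close>-mass of the
  set of points hit by \<open>s\<close> samples from \<open>P\<close>.\<close>

definition cover_mass_deriv :: "nat \<Rightarrow> real \<Rightarrow> real" where
  "cover_mass_deriv s p = cover_prob s p + real s * p * (1 - p) ^ (s - 1)"

definition cover_mass_deriv2 :: "nat \<Rightarrow> real \<Rightarrow> real" where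
  "cover_mass_deriv2 s p = 2 * real s * (1 - p) ^ (s - 1) - real s * real (s - 1) * p * (1 - p) ^ (s - 2)"

definition cover_tangent :: "nat \<Rightarrow> real \<Rightarrow> real \<Rightarrow> real" where
  "cover_tangent s q p = q * cover_prob s q + cover_mass_deriv s q * (p - q)"

definition cover_excess :: "nat \<Rightarrow> real \<Rightarrow> real \<Rightarrow> real" where
  "cover_excess s q p = p * cover_prob s p - cover_tangent s q p"

lemma cover_mass_has_deriv: "((\<lambda>p. p * cover_prob s p) has_real_derivative cover_mass_deriv s p) (at p)"
  unfolding cover_prob_def cover_mass_deriv_def
  by (rule derivative_eq_intros refl | simp)+

lemma cover_mass_deriv_has_deriv: "(cover_mass_deriv s has_real_derivative cover_mass_deriv2 s p) (at p)"
proof -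
  have "((\<lambda>p. 1 - (1 - p) ^ s + real s * p * (1 - p) ^ (s - 1)) has_real_derivative cover_mass_deriv2 s p) (at p)"
    unfolding cover_mass_deriv2_def
    by (rule derivative_eq_intros refl | simp)+ (simp add: algebra_simps numeral_2_eq_2)
  then show ?thesis unfolding cover_mass_deriv_def[abs_def] cover_prob_def .
qed

lemma cover_excess_has_deriv:
  "(cover_excess s q has_real_derivative cover_mass_deriv s p - cover_mass_deriv s q) (at p)"
  unfolding cover_excess_def[abs_def] cover_tangent_def
  by (rule derivative_eq_intros cover_mass_has_deriv refl | simp)+

lemma cover_mass_deriv2_eq:
  assumes "2 \<le> s"
  shows "cover_mass_deriv2 s p = real s * (1 - p) ^ (s - 2) * (2 - (real s + 1) * p)"
proof -
  have "(1 - p) ^ (s - 1) = (1 - p) * (1 - p) ^ (s - 2)"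
    using assms by (simp add: power_Suc[symmetric] Suc_diff_Suc numeral_2_eq_2)
  moreover have "real (s - 1) = real s - 1" using assms by simp
  ultimately show ?thesis unfolding cover_mass_deriv2_def by (simp only:) (simp add: algebra_simps)
qed

lemma power_one_minus_ge_ninth:
  fixes q :: real
  assumes "0 \<le> q" "q \<le> 1/2" "real s * q \<le> 1"
  shows "1/9 \<le> (1 - q) ^ s"
proof -
  have "1/9 \<le> exp (-2::real)"
  proof -
    have "exp (1::real) * exp 1 \<le> 3 * 3"
      using exp_bound[of 1] by (intro mult_mono) auto
    then show ?thesis by (simp add: exp_minus exp_add[symmetric] field_simps)
  qed
  also have "-2 \<le> real s * (- q - 2 * q\<^sup>2)"
  proof -
    have "real s * q * (1 + 2 * q) \<le> 1 * 2"
      using assms by (intro mult_mono) auto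
    then show ?thesis by (simp add: power2_eq_square algebra_simps)
  qed
  also have "real s * (- q - 2 * q\<^sup>2) \<le> real s * ln (1 - q)"
    using ln_one_minus_pos_lower_bound[of q] assms by (intro mult_left_mono) auto
  also have "exp (real s * ln (1 - q)) = (1 - q) ^ s"
    using assms by (subst exp_of_nat_mult) simp
  finally show ?thesis by simp
qed

lemma cover_mass_deriv2_ge:
  assumes "1 \<le> s" "0 \<le> u" "u \<le> q" "q \<le> 1/2" "real s * q \<le> 1"
  shows "real s / 18 \<le> cover_mass_deriv2 s u"
proof (cases "s = 1")
  case False
  then have s2: "2 \<le> s" using assms by simp
  have "1/9 \<le> (1 - q) ^ s" by (rule power_one_minus_ge_ninth) (use assms in auto)
  also have "\<dots> \<le> (1 - q) ^ (s - 2)" using assms by (intro power_decreasing) auto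
  also have "\<dots> \<le> (1 - u) ^ (s - 2)" using assms by (intro power_mono) auto
  finally have a: "1/9 \<le> (1 - u) ^ (s - 2)" .
  have "(real s + 1) * u \<le> real s * q + q"
    using assms by (simp add: algebra_simps mult_left_mono add_mono)
  then have b: "1/2 \<le> 2 - (real s + 1) * u" using assms by linarith
  have "real s * (1/9) * (1/2) \<le> real s * (1 - u) ^ (s - 2) * (2 - (real s + 1) * u)"
    using a b by (intro mult_mono) auto
  then show ?thesis using cover_mass_deriv2_eq[OF s2] by simp
qed (simp add: cover_mass_deriv2_def)

text \<open>Since the second derivative of \<open>p * cover_prob s p\<close> is at least \<open>s / 18\<close> below \<open>q\<close>,
  the excess over the tangent grows quadratically there.\<close>
lemma cover_excess_ge_square:
  assumes s: "1 \<le> s" and p: "0 \<le> p" "p \<le> q" and q: "q \<le> 1/2" "real s * q \<le> 1"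
  shows "real s / 36 * (q - p)\<^sup>2 \<le> cover_excess s q p"
proof -
  define k where "k u = cover_mass_deriv s u - real s / 18 * u" for u
  have k_mono: "k t \<le> k q" if "p \<le> t" "t \<le> q" for t
  proof (rule DERIV_nonneg_imp_nondecreasing[OF that(2)])
    fix x assume x: "t \<le> x" "x \<le> q"
    have "(k has_real_derivative (cover_mass_deriv2 s x - real s / 18 * 1)) (at x)"
      unfolding k_def[abs_def] by (rule derivative_eq_intros cover_mass_deriv_has_deriv refl | simp)+
    moreover have "real s / 18 \<le> cover_mass_deriv2 s x"
      using cover_mass_deriv2_ge[OF s, of x q] x that p q by auto
    ultimately show "\<exists>y. (k has_real_derivative y) (at x) \<and> 0 \<le> y" by auto
  qed
  define g where "g u = cover_excess s q u - real s / 36 * (q - u)\<^sup>2" for u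
  have "g q \<le> g p"
  proof (rule DERIV_nonpos_imp_nonincreasing[OF p(2)])
    fix x assume x: "p \<le> x" "x \<le> q"
    have "(g has_real_derivative (cover_mass_deriv s x - cover_mass_deriv s q
        - real s / 36 * (2 * (q - x) * (0 - 1)))) (at x)"
      unfolding g_def[abs_def] by (rule derivative_eq_intros cover_excess_has_deriv refl | simp)+
    moreover have "cover_mass_deriv s x - cover_mass_deriv s q - real s / 36 * (2 * (q - x) * (0 - 1)) \<le> 0"
      using k_mono[OF x] unfolding k_def by (simp add: algebra_simps)
    ultimately show "\<exists>y. (g has_real_derivative y) (at x) \<and> y \<le> 0" by auto
  qed
  moreover have "g q = 0" unfolding g_def cover_excess_def cover_tangent_def by simp
  ultimately show ?thesis unfolding g_def by simp
qed

lemma cover_mass_deriv_mono: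
  assumes "2 \<le> s" "0 \<le> a" "a \<le> b" "b \<le> 2 / (real s + 1)"
  shows "cover_mass_deriv s a \<le> cover_mass_deriv s b"
proof (rule DERIV_nonneg_imp_nondecreasing[OF assms(3)])
  fix u assume u: "a \<le> u" "u \<le> b"
  have "(real s + 1) * u \<le> (real s + 1) * b" using u by (intro mult_left_mono) auto
  also have "\<dots> \<le> 2" using assms by (simp add: field_simps)
  finally have "(real s + 1) * u \<le> 2" .
  moreover have "3 * u \<le> (real s + 1) * u" using u assms by (intro mult_right_mono) auto
  ultimately have "u \<le> 1" by linarith
  then have "0 \<le> cover_mass_deriv2 s u"
    using \<open>(real s + 1) * u \<le> 2\<close> assms by (simp add: cover_mass_deriv2_eq)
  then show "\<exists>y. (cover_mass_deriv s has_real_derivative y) (at u) \<and> 0 \<le> y"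
    using cover_mass_deriv_has_deriv by blast
qed

lemma cover_mass_deriv_antimono:
  assumes "2 \<le> s" "2 / (real s + 1) \<le> a" "a \<le> b" "b \<le> 1"
  shows "cover_mass_deriv s b \<le> cover_mass_deriv s a"
proof (rule DERIV_nonpos_imp_nonincreasing[OF assms(3)])
  fix u assume u: "a \<le> u" "u \<le> b"
  have "2 \<le> (real s + 1) * a" using assms by (simp add: field_simps)
  also have "\<dots> \<le> (real s + 1) * u" using u by (intro mult_left_mono) auto
  finally have "2 \<le> (real s + 1) * u" .
  then have "cover_mass_deriv2 s u \<le> 0"
    using u assms by (simp add: cover_mass_deriv2_eq mult_nonneg_nonpos)
  then show "\<exists>y. (cover_mass_deriv s has_real_derivative y) (at u) \<and> y \<le> 0"
    using cover_mass_deriv_has_deriv by blast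
qed

lemma cover_excess_at_1:
  assumes "1 \<le> s"
  shows "cover_excess s q 1 = (1 - q) ^ s * (1 - real s * q)"
proof -
  have e: "(1 - q) ^ s = (1 - q) * (1 - q) ^ (s - 1)"
    using assms by (simp add: power_eq_if)
  show ?thesis
    unfolding cover_excess_def cover_tangent_def cover_mass_deriv_def cover_prob_def e
    using assms by (simp add: algebra_simps zero_power)
qed

text \<open>On \<open>[q, 1]\<close> the derivative of the excess rises and then falls, so the excess is bounded below by
  its values at \<open>q\<close> (zero) and at \<open>1\<close>.\<close>
lemma cover_excess_nonneg_heavy:
  assumes s: "1 \<le> s" and q: "0 < q" "real s * q \<le> 1" and p: "q \<le> p" "p \<le> 1"
  shows "0 \<le> cover_excess s q p"
proof (cases "s = 1")
  case True
  then have "cover_excess s q p = (p - q)\<^sup>2"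
    by (simp add: cover_excess_def cover_tangent_def cover_mass_deriv_def cover_prob_def
        power2_eq_square algebra_simps)
  then show ?thesis by simp
next
  case False
  then have s2: "2 \<le> s" using s by simp
  define p0 where "p0 = 2 / (real s + 1)"
  have "q * (real s + 1) \<le> 2" using q p by (simp add: algebra_simps)
  then have "q \<le> p0" by (simp add: p0_def pos_le_divide_eq)
  have grow: "cover_excess s q q \<le> cover_excess s q p"
    if "\<And>t. q \<le> t \<Longrightarrow> t \<le> p \<Longrightarrow> cover_mass_deriv s q \<le> cover_mass_deriv s t"
    by (rule DERIV_nonneg_imp_nondecreasing[OF p(1)]) (use cover_excess_has_deriv that in force)
  show ?thesis
  proof (cases "p \<le> p0 \<or> cover_mass_deriv s q \<le> cover_mass_deriv s p")
    case True
    have "cover_mass_deriv s q \<le> cover_mass_deriv s t" if "q \<le> t" "t \<le> p" for t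
    proof (cases "t \<le> p0")
      case True then show ?thesis using cover_mass_deriv_mono[OF s2, of q t] that q by (auto simp: p0_def)
    next
      case False then show ?thesis
        using cover_mass_deriv_antimono[OF s2, of t p] \<open>p \<le> p0 \<or> _\<close> that p by (auto simp: p0_def)
    qed
    then show ?thesis using grow by (simp add: cover_excess_def cover_tangent_def)
  next
    case False
    have "cover_excess s q 1 \<le> cover_excess s q p"
    proof (rule DERIV_nonpos_imp_nonincreasing[OF p(2)])
      fix x assume "p \<le> x" "x \<le> 1"
      then have "cover_mass_deriv s x \<le> cover_mass_deriv s q"
        using cover_mass_deriv_antimono[OF s2, of p x] False by (auto simp: p0_def)
      then show "\<exists>y. (cover_excess s q has_real_derivative y) (at x) \<and> y \<le> 0"
        using cover_excess_has_deriv by fastforce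
    qed
    moreover have "0 \<le> (1 - q) ^ s * (1 - real s * q)" using q p by simp
    ultimately show ?thesis using cover_excess_at_1[OF s] by simp
  qed
qed

lemma cover_excess_nonneg:
  assumes "1 \<le> s" "0 < q" "q \<le> 1/2" "real s * q \<le> 1" "0 \<le> p" "p \<le> 1"
  shows "0 \<le> cover_excess s q p"
proof (cases "p \<le> q")
  case True
  have "0 \<le> real s / 36 * (q - p)\<^sup>2" by simp
  then show ?thesis using cover_excess_ge_square[of s p q] assms True by linarith
qed (use assms cover_excess_nonneg_heavy in auto)

lemma cover_tangent_le:
  assumes "0 \<le> q" "q \<le> 1" "0 \<le> p"
  shows "cover_tangent s q p \<le> 2 * real s * q * p"
proof -
  have "0 \<le> real s * q * (1 - q) ^ (s - 1)" using assms by simp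
  then have "q * cover_prob s q \<le> q * cover_mass_deriv s q"
    using assms by (intro mult_left_mono) (auto simp: cover_mass_deriv_def)
  moreover have "cover_mass_deriv s q \<le> 2 * real s * q"
  proof -
    have "real s * q * (1 - q) ^ (s - 1) \<le> real s * q * 1"
      using assms by (intro mult_left_mono power_le_one) auto
    then show ?thesis using cover_prob_le[of q s] assms by (simp add: cover_mass_deriv_def)
  qed
  then have "cover_mass_deriv s q * p \<le> 2 * real s * q * p"
    using assms by (intro mult_right_mono)
  moreover have "cover_tangent s q p = q * cover_prob s q - q * cover_mass_deriv s q + cover_mass_deriv s q * p"
    by (simp add: cover_tangent_def algebra_simps)
  ultimately show ?thesis by linarith
qed

lemma sum_cover_tangent:
  assumes "finite X" "X \<noteq> {}" "(\<Sum>x\<in>X. f x) = 1"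
  shows "(\<Sum>x\<in>X. cover_tangent s (1 / real (card X)) (f x)) = cover_prob s (1 / real (card X))"
  using assms by (simp add: cover_tangent_def sum.distrib sum_subtractf sum_distrib_left[symmetric])

lemma cover_excess_ge_tangent_gap:
  assumes "0 \<le> q" "q \<le> 1" "0 \<le> p"
  shows "p * (cover_prob s p - 2 * real s * q) \<le> cover_excess s q p"
  using cover_tangent_le[OF assms, of s] by (simp add: cover_excess_def algebra_simps)

lemma cover_excess_ge_heavy:
  assumes "0 \<le> q" "q \<le> 1" "0 \<le> p" "p \<le> 1" "\<beta> \<le> 1" "\<beta> \<le> real s * p" "8 * real s * q \<le> \<beta>"
  shows "\<beta> / 4 * p \<le> cover_excess s q p"
proof -
  have pos: "0 < 1 + real s * p" using assms by (simp add: add_pos_nonneg)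
  have "\<beta> * (real s * p) \<le> 1 * (real s * p)"
    using assms by (intro mult_right_mono) auto
  then have "\<beta> * (1 + real s * p) \<le> 2 * (real s * p)"
    using assms by (simp add: algebra_simps)
  then have "\<beta> / 2 \<le> real s * p / (1 + real s * p)" using pos by (simp add: field_simps)
  then have "\<beta> / 2 \<le> cover_prob s p" using cover_prob_ge[of p s] assms by linarith
  then have "p * (\<beta> / 4) \<le> p * (cover_prob s p - 2 * real s * q)"
    using assms by (intro mult_left_mono) auto
  then show ?thesis using cover_excess_ge_tangent_gap[of q p s] assms by (simp add: algebra_simps)
qed

text \<open>For light points the variance term is either of second order in \<open>q\<close> or is controlled by the
  excess, which there is at least \<open>s p\<^sup>2 / 4\<close>.\<close>
lemma cover_variance_le_excess:
  assumes s: "1 \<le> s" and q: "0 < q" "q \<le> 1/2" "real s * q \<le> 1"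
    and p: "0 \<le> p" "p \<le> 1" "real s * p \<le> \<beta>" and \<beta>: "\<beta> \<le> 1"
  shows "p\<^sup>2 * (cover_prob s p * (1 - cover_prob s p)) \<le> 64 * real s * q\<^sup>2 * p + 4 * \<beta> / real s * cover_excess s q p"
proof -
  have var: "p\<^sup>2 * (cover_prob s p * (1 - cover_prob s p)) \<le> real s * p ^ 3"
    using p(1,2) by (rule cover_variance_le_cube)
  have excess: "0 \<le> cover_excess s q p" using cover_excess_nonneg s q p by auto
  have \<beta>0: "0 \<le> \<beta>" using p mult_nonneg_nonneg[of "real s" p] by linarith
  show ?thesis
  proof (cases "p \<le> 8 * q")
    case True
    have "real s * p ^ 3 = real s * p * p\<^sup>2" by (simp add: power2_eq_square power3_eq_cube)
    also have "\<dots> \<le> real s * p * (8 * q)\<^sup>2" using True p by (intro mult_left_mono power_mono) auto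
    also have "\<dots> = 64 * real s * q\<^sup>2 * p" by (simp add: power2_eq_square)
    finally have "real s * p ^ 3 \<le> 64 * real s * q\<^sup>2 * p" .
    moreover have "0 \<le> 4 * \<beta> / real s * cover_excess s q p" using excess \<beta>0 by simp
    ultimately show ?thesis using var by linarith
  next
    case False
    have "real s * p / 2 \<le> real s * p / (1 + real s * p)"
      using p \<beta> by (intro divide_left_mono) (auto simp: add_pos_nonneg)
    then have "real s * p / 2 \<le> cover_prob s p" using cover_prob_ge[OF p(1,2), of s] by linarith
    moreover have "2 * real s * q \<le> real s * p / 4" using False s by (simp add: field_simps)
    ultimately have "p * (real s * p / 4) \<le> p * (cover_prob s p - 2 * real s * q)"
      using p by (intro mult_left_mono) auto
    also have "\<dots> \<le> cover_excess s q p" using cover_excess_ge_tangent_gap q p by simp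
    finally have "p\<^sup>2 \<le> 4 / real s * cover_excess s q p"
      using s by (simp add: power2_eq_square field_simps)
    then have "\<beta> * p\<^sup>2 \<le> \<beta> * (4 / real s * cover_excess s q p)"
      using \<beta>0 by (rule mult_left_mono)
    moreover have "real s * p ^ 3 = (real s * p) * p\<^sup>2" by (simp add: power2_eq_square power3_eq_cube)
    moreover have "(real s * p) * p\<^sup>2 \<le> \<beta> * p\<^sup>2" using p by (intro mult_right_mono) auto
    moreover have "\<beta> * (4 / real s * cover_excess s q p) = 4 * \<beta> / real s * cover_excess s q p"
      by simp
    moreover have "0 \<le> 64 * real s * q\<^sup>2 * p" using p by simp
    ultimately show ?thesis using var by linarith
  qed
qed

section \<open>Distributions far from uniform\<close>

lemma dTV_unif_eq_sum_deficit:
  assumes "1 \<le> n" and supp: "set_pmf P \<subseteq> {1..n}"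
  shows "dTV n P (unif n) = (\<Sum>x\<in>{x\<in>{1..n}. pmf P x < 1 / real n}. 1 / real n - pmf P x)"
proof -
  let ?X = "{1..n}" and ?L = "{x\<in>{1..n}. pmf P x < 1 / real n}"
  let ?d = "\<lambda>x. pmf P x - 1 / real n"
  have "(\<Sum>x\<in>?X. pmf P x) = 1" using supp by (intro sum_pmf_eq_1) auto
  then have "(\<Sum>x\<in>?X. ?d x) = 0" using assms by (simp add: sum_subtractf)
  moreover have split: "(\<Sum>x\<in>?X. f x) = (\<Sum>x\<in>?L. f x) + (\<Sum>x\<in>?X - ?L. f x)" for f :: "nat \<Rightarrow> real"
    by (subst sum.subset_diff[of ?L ?X]) auto
  ultimately have "(\<Sum>x\<in>?L. ?d x) + (\<Sum>x\<in>?X - ?L. ?d x) = 0" by simp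
  then have "(\<Sum>x\<in>?X - ?L. ?d x) = (\<Sum>x\<in>?L. 1 / real n - pmf P x)"
    by (simp add: sum_subtractf sum_negf[symmetric])
  moreover have "(\<Sum>x\<in>?X. \<bar>?d x\<bar>) = (\<Sum>x\<in>?L. 1 / real n - pmf P x) + (\<Sum>x\<in>?X - ?L. ?d x)"
    by (subst split) (auto intro!: arg_cong2[where f = "(+)"] sum.cong)
  moreover have "dTV n P (unif n) = (1/2) * (\<Sum>x\<in>?X. \<bar>?d x\<bar>)"
    unfolding dTV_def unif_def by (intro arg_cong2[where f = "(*)"] sum.cong) auto
  ultimately show ?thesis by simp
qed

lemma square_div_le_sum_power2:
  fixes a :: "'a \<Rightarrow> real"
  assumes "finite L" "card L \<le> n" "0 \<le> e" "e \<le> (\<Sum>x\<in>L. a x)"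
  shows "e\<^sup>2 / real n \<le> (\<Sum>x\<in>L. (a x)\<^sup>2)"
proof -
  have "e\<^sup>2 \<le> (\<Sum>x\<in>L. a x * 1)\<^sup>2" using assms by (intro power_mono) auto
  also have "\<dots> \<le> (\<Sum>x\<in>L. (a x)\<^sup>2) * real (card L)"
    using Cauchy_Schwarz_ineq_sum[of a "\<lambda>_. 1" L] by simp
  also have "\<dots> \<le> (\<Sum>x\<in>L. (a x)\<^sup>2) * real n"
    using assms by (intro mult_left_mono) (auto intro: sum_nonneg)
  finally show ?thesis by (cases "n = 0") (auto simp: field_simps intro: sum_nonneg)
qed

locale far_from_uniform =
  fixes P :: "nat pmf" and n s :: nat and \<epsilon> :: real
  assumes n: "2 \<le> n" and supp: "set_pmf P \<subseteq> {1..n}" and s: "1 \<le> s" "s \<le> n"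
    and \<epsilon>: "0 < \<epsilon>" "\<epsilon> \<le> 1" and far: "\<epsilon> \<le> dTV n P (unif n)"
    and large_sample: "2^64 \<le> real s * \<epsilon>^4" and square_sample: "real n \<le> (real s)\<^sup>2 * \<epsilon>\<^sup>2"
begin

definition q :: real where "q = 1 / real n"
text \<open>\<open>\<tau>\<close> is the paper's threshold margin for \<open>c' = 1/1024\<close>.\<close>
definition \<tau> :: real where "\<tau> = real s * \<epsilon>\<^sup>2 / (1024 * real n)"
definition \<gamma> :: real where "\<gamma> = real s * \<epsilon>\<^sup>2 / (36 * real n)"

text \<open>The sampled \<open>P\<close>-mass of \<open>A\<close> minus the mass predicted by the tangents at \<open>q\<close>; its mean is the
  total excess of \<open>A\<close>.\<close>
definition gain :: "nat set \<Rightarrow> nat list \<Rightarrow> real" where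
  "gain A xs = (\<Sum>x\<in>A \<inter> set xs. pmf P x) - (\<Sum>x\<in>A. cover_tangent s q (pmf P x))"

lemma q_bounds: "0 < q" "q \<le> 1/2" "real s * q \<le> 1"
  using n s by (auto simp: q_def field_simps)

lemma \<gamma>_pos: "0 < \<gamma>"
  using n s \<epsilon> by (simp add: \<gamma>_def)

lemma \<tau>_le: "3 * \<tau> \<le> \<gamma> / 4"
  using n s \<epsilon> by (simp add: \<tau>_def \<gamma>_def field_simps)

lemma sum_pmf_P: "(\<Sum>x\<in>{1..n}. pmf P x) = 1"
  using supp by (intro sum_pmf_eq_1) auto

lemma excess_nonneg: "0 \<le> cover_excess s q (pmf P x)"
  using q_bounds s by (intro cover_excess_nonneg) (auto simp: pmf_le_1)

lemma excess_sum_ge: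
  assumes "{x\<in>{1..n}. pmf P x < q} \<subseteq> A" "A \<subseteq> {1..n}"
  shows "\<gamma> \<le> (\<Sum>x\<in>A. cover_excess s q (pmf P x))"
proof -
  let ?L = "{x\<in>{1..n}. pmf P x < q}"
  have "card ?L \<le> card {1..n}" by (rule card_mono) auto
  then have "card ?L \<le> n" by simp
  moreover have "\<epsilon> \<le> (\<Sum>x\<in>?L. q - pmf P x)"
    using far dTV_unif_eq_sum_deficit[OF _ supp] n by (simp add: q_def)
  ultimately have "\<epsilon>\<^sup>2 / real n \<le> (\<Sum>x\<in>?L. (q - pmf P x)\<^sup>2)"
    using \<epsilon> by (intro square_div_le_sum_power2) auto
  then have "real s / 36 * (\<epsilon>\<^sup>2 / real n) \<le> real s / 36 * (\<Sum>x\<in>?L. (q - pmf P x)\<^sup>2)"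
    by (intro mult_left_mono) auto
  then have "\<gamma> \<le> (\<Sum>x\<in>?L. real s / 36 * (q - pmf P x)\<^sup>2)"
    by (simp add: \<gamma>_def sum_distrib_left)
  also have "\<dots> \<le> (\<Sum>x\<in>?L. cover_excess s q (pmf P x))"
    using s q_bounds by (intro sum_mono cover_excess_ge_square) auto
  also have "\<dots> \<le> (\<Sum>x\<in>A. cover_excess s q (pmf P x))"
    using assms excess_nonneg by (intro sum_mono2) (auto intro: finite_subset)
  finally show ?thesis .
qed

lemma gain_split:
  assumes "xs \<in> set_pmf (replicate_pmf s P)" "A \<subseteq> {1..n}"
  shows "measure_pmf.prob P (set xs) - cover_prob s q = gain A xs + gain ({1..n} - A) xs"
proof -
  have "set xs \<subseteq> {1..n}" using assms supp by (auto simp: set_replicate_pmf)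
  then have "measure_pmf.prob P (set xs) = (\<Sum>x\<in>{1..n} \<inter> set xs. pmf P x)"
    by (simp add: measure_measure_pmf_finite Int_absorb1)
  moreover have "cover_prob s q = (\<Sum>x\<in>{1..n}. cover_tangent s q (pmf P x))"
    using sum_cover_tangent[of "{1..n}" "pmf P" s] sum_pmf_P n by (simp add: q_def)
  moreover have "(\<Sum>x\<in>{1..n}. f x) = (\<Sum>x\<in>A. f x) + (\<Sum>x\<in>{1..n} - A. f x)"
    for f :: "nat \<Rightarrow> real"
    using sum.subset_diff[of A "{1..n}" f] assms(2) by simp
  moreover have "(\<Sum>x\<in>{1..n} \<inter> set xs. f x) = (\<Sum>x\<in>A \<inter> set xs. f x) + (\<Sum>x\<in>({1..n} - A) \<inter> set xs. f x)"
    for f :: "nat \<Rightarrow> real"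
    using sum.subset_diff[of "A \<inter> set xs" "{1..n} \<inter> set xs" f] assms(2)
    by (auto simp: Diff_Int_distrib2 add.commute)
  ultimately show ?thesis unfolding gain_def by simp
qed

abbreviation mass_var :: "nat \<Rightarrow> real" where
  "mass_var x \<equiv> (pmf P x)\<^sup>2 * (cover_prob s (pmf P x) * (1 - cover_prob s (pmf P x)))"

lemma prob_gain_le_half:
  fixes A :: "nat set"
  defines "G \<equiv> \<Sum>x\<in>A. cover_excess s q (pmf P x)"
  assumes A: "A \<subseteq> {1..n}" and G: "0 < G"
  shows "measure_pmf.prob (replicate_pmf s P) {xs. gain A xs \<le> G / 2} \<le> 4 * (\<Sum>x\<in>A. mass_var x) / G\<^sup>2"
proof -
  have "finite A" using A by (rule finite_subset) simp
  have "gain A xs \<le> G / 2 \<longleftrightarrow> (\<Sum>x\<in>A \<inter> set xs. pmf P x) \<le> (\<Sum>x\<in>A. pmf P x * cover_prob s (pmf P x)) - G / 2"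
    for xs by (simp add: gain_def G_def cover_excess_def sum_subtractf field_simps)
  then have "measure_pmf.prob (replicate_pmf s P) {xs. gain A xs \<le> G / 2} \<le> (\<Sum>x\<in>A. mass_var x) / (G / 2)\<^sup>2"
    using prob_sum_sampled_le[OF \<open>finite A\<close>, of "pmf P" "G / 2" s P] G unfolding G_def by simp
  then show ?thesis by (simp add: power2_eq_square field_simps)
qed

lemma mass_var_nonneg: "0 \<le> mass_var x"
  using cover_prob_nonneg cover_prob_le_1 by (simp add: pmf_le_1)

lemma sum_mass_var_le: "(\<Sum>x\<in>A. mass_var x) \<le> (\<Sum>x\<in>A. pmf P x) / real s"
  unfolding sum_divide_distrib using s by (intro sum_mono cover_variance_le_div) (auto simp: pmf_le_1)

lemma low_mass_imp_gain_le:
  assumes "xs \<in> set_pmf (replicate_pmf s P)" "measure_pmf.prob P (set xs) \<le> cover_prob s q + 3 * \<tau>"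
    and "A \<subseteq> {1..n}"
  shows "gain A xs + gain ({1..n} - A) xs \<le> 3 * \<tau>"
  using gain_split[OF assms(1,3)] assms(2) by simp

lemma prob_low_mass_large:
  assumes "real n < 2^22 * real s"
  shows "measure_pmf.prob (replicate_pmf s P) {xs. measure_pmf.prob P (set xs) \<le> cover_prob s q + 3 * \<tau>}
    \<le> 1/100"
proof -
  let ?X = "{1..n}"
  define G where "G = (\<Sum>x\<in>?X. cover_excess s q (pmf P x))"
  have G: "\<gamma> \<le> G" unfolding G_def by (rule excess_sum_ge) auto
  have "measure_pmf.prob (replicate_pmf s P) {xs. measure_pmf.prob P (set xs) \<le> cover_prob s q + 3 * \<tau>}
      \<le> measure_pmf.prob (replicate_pmf s P) {xs. gain ?X xs \<le> G / 2}"
  proof (rule measure_pmf_prob_mono_set_pmf)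
    fix xs assume "xs \<in> set_pmf (replicate_pmf s P)"
      "xs \<in> {xs. measure_pmf.prob P (set xs) \<le> cover_prob s q + 3 * \<tau>}"
    then have "gain ?X xs \<le> 3 * \<tau>" using low_mass_imp_gain_le[of xs ?X] by (simp add: gain_def)
    then show "xs \<in> {xs. gain ?X xs \<le> G / 2}" using \<tau>_le G \<gamma>_pos by simp
  qed
  also have "\<dots> \<le> 4 * (\<Sum>x\<in>?X. mass_var x) / G\<^sup>2"
    using G \<gamma>_pos unfolding G_def by (intro prob_gain_le_half) auto
  also have "\<dots> \<le> 4 * (1 / real s) / \<gamma>\<^sup>2"
    using sum_mass_var_le[of ?X] sum_pmf_P G \<gamma>_pos
    by (intro frac_le mult_left_mono power_mono) (auto intro: sum_nonneg mass_var_nonneg)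
  also have "\<dots> = 5184 * (real n)\<^sup>2 / ((real s)\<^sup>2 * (real s * \<epsilon>^4))"
    using s \<epsilon> n by (simp add: \<gamma>_def power2_eq_square power4_eq_xxxx field_simps)
  also have "\<dots> \<le> 5184 * (2^22 * real s)\<^sup>2 / ((real s)\<^sup>2 * (real s * \<epsilon>^4))"
    using assms s \<epsilon> by (intro divide_right_mono mult_left_mono power_mono) auto
  also have "\<dots> = 5184 * 2^44 / (real s * \<epsilon>^4)"
    using s by (simp add: power2_eq_square field_simps)
  also have "\<dots> \<le> 5184 * 2^44 / 2^64"
    using large_sample by (intro divide_left_mono) auto
  finally show ?thesis by simp
qed

definition light :: "nat set" where
  "light = {x\<in>{1..n}. real s * pmf P x < 1 / 2^16}"

definition heavy :: "nat set" where
  "heavy = {1..n} - light"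

lemma sample_q_small:
  assumes "2^22 * real s \<le> real n"
  shows "real s * q \<le> 1 / 2^22"
  using assms s n by (simp add: q_def field_simps)

lemma excess_sum_light_ge:
  assumes "2^22 * real s \<le> real n"
  shows "\<gamma> \<le> (\<Sum>x\<in>light. cover_excess s q (pmf P x))"
proof (rule excess_sum_ge)
  show "{x\<in>{1..n}. pmf P x < q} \<subseteq> light"
  proof safe
    fix x assume "x \<in> {1..n}" "pmf P x < q"
    then have "real s * pmf P x \<le> real s * q" by (simp add: mult_left_mono)
    then show "x \<in> light" using \<open>x \<in> {1..n}\<close> sample_q_small[OF assms] by (simp add: light_def)
  qed
qed (auto simp: light_def)

lemma prob_gain_light:
  assumes small: "2^22 * real s \<le> real n"
  shows "measure_pmf.prob (replicate_pmf s P)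
      {xs. gain light xs \<le> (\<Sum>x\<in>light. cover_excess s q (pmf P x)) / 2} \<le> 1/100"
proof -
  define \<beta> :: real where "\<beta> = 1 / 2^16"
  define G where "G = (\<Sum>x\<in>light. cover_excess s q (pmf P x))"
  have G: "\<gamma> \<le> G" unfolding G_def by (rule excess_sum_light_ge[OF small])
  have light_sub: "light \<subseteq> {1..n}" by (auto simp: light_def)
  have "(\<Sum>x\<in>light. pmf P x) \<le> 1"
    using sum_mono2[OF _ light_sub, of "pmf P"] sum_pmf_P by simp
  then have "64 * real s * q\<^sup>2 * (\<Sum>x\<in>light. pmf P x) \<le> 64 * real s * q\<^sup>2"
    by (intro mult_left_le) (auto intro: sum_nonneg)
  moreover have "(\<Sum>x\<in>light. mass_var x)
      \<le> (\<Sum>x\<in>light. 64 * real s * q\<^sup>2 * pmf P x + 4 * \<beta> / real s * cover_excess s q (pmf P x))"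
    using s q_bounds by (intro sum_mono cover_variance_le_excess) (auto simp: light_def \<beta>_def pmf_le_1)
  moreover have "\<dots> = 64 * real s * q\<^sup>2 * (\<Sum>x\<in>light. pmf P x) + 4 * \<beta> / real s * G"
    by (simp add: G_def sum.distrib sum_distrib_left)
  ultimately have V: "(\<Sum>x\<in>light. mass_var x) \<le> 64 * real s * q\<^sup>2 + 4 * \<beta> / real s * G"
    by linarith
  have "measure_pmf.prob (replicate_pmf s P) {xs. gain light xs \<le> G / 2} \<le> 4 * (\<Sum>x\<in>light. mass_var x) / G\<^sup>2"
    using G \<gamma>_pos light_sub unfolding G_def by (intro prob_gain_le_half) auto
  also have "\<dots> \<le> 4 * (64 * real s * q\<^sup>2 + 4 * \<beta> / real s * G) / G\<^sup>2"
    using V by (intro divide_right_mono) auto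
  also have "\<dots> = 4 * (64 * real s * q\<^sup>2) / G\<^sup>2 + 4 * (4 * \<beta> / real s) / G"
    using G \<gamma>_pos by (simp add: power2_eq_square add_divide_distrib)
  also have "\<dots> \<le> 4 * (64 * real s * q\<^sup>2) / \<gamma>\<^sup>2 + 4 * (4 * \<beta> / real s) / \<gamma>"
    using G \<gamma>_pos s by (intro add_mono divide_left_mono power_mono mult_pos_pos) (auto simp: \<beta>_def)
  also have "\<dots> = 331776 / (real s * \<epsilon>^4) + 576 * \<beta> * (real n / ((real s)\<^sup>2 * \<epsilon>\<^sup>2))"
    using s \<epsilon> n by (simp add: \<gamma>_def q_def power2_eq_square power4_eq_xxxx field_simps)
  also have "\<dots> \<le> 331776 / 2^64 + 576 * \<beta> * 1"
    using large_sample square_sample s \<epsilon>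
    by (intro add_mono divide_left_mono mult_left_mono) (auto simp: \<beta>_def divide_le_eq_1)
  finally show ?thesis by (simp add: G_def \<beta>_def)
qed

lemma heavy_iff: "x \<in> heavy \<longleftrightarrow> x \<in> {1..n} \<and> 1 / 2^16 \<le> real s * pmf P x"
  by (auto simp: heavy_def light_def)

lemma excess_sum_heavy_ge:
  assumes "2^22 * real s \<le> real n"
  shows "(\<Sum>x\<in>heavy. pmf P x) / 2^18 \<le> (\<Sum>x\<in>heavy. cover_excess s q (pmf P x))"
proof -
  have "8 * real s * q \<le> 1 / 2^16" using sample_q_small[OF assms] by simp
  then have "1 / 2^16 / 4 * pmf P x \<le> cover_excess s q (pmf P x)" if "x \<in> heavy" for x
    using that q_bounds by (intro cover_excess_ge_heavy) (auto simp: heavy_iff pmf_le_1)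
  then show ?thesis by (simp add: sum_divide_distrib sum_mono)
qed

lemma prob_gain_heavy:
  assumes small: "2^22 * real s \<le> real n" and heavy: "\<epsilon>\<^sup>2 / 288 < (\<Sum>x\<in>heavy. pmf P x)"
  shows "0 < (\<Sum>x\<in>heavy. cover_excess s q (pmf P x))"
    and "measure_pmf.prob (replicate_pmf s P)
      {xs. gain heavy xs \<le> (\<Sum>x\<in>heavy. cover_excess s q (pmf P x)) / 2} \<le> 1/100"
proof -
  define M where "M = (\<Sum>x\<in>heavy. pmf P x)"
  define G where "G = (\<Sum>x\<in>heavy. cover_excess s q (pmf P x))"
  have "0 < \<epsilon>\<^sup>2 / 288" using \<epsilon> by simp
  then have M: "\<epsilon>\<^sup>2 / 288 < M" "0 < M" using heavy unfolding M_def by linarith+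
  have G: "M / 2^18 \<le> G" unfolding M_def G_def by (rule excess_sum_heavy_ge[OF small])
  then show G_pos: "0 < (\<Sum>x\<in>heavy. cover_excess s q (pmf P x))" using M by (simp add: G_def)
  have "measure_pmf.prob (replicate_pmf s P) {xs. gain heavy xs \<le> G / 2} \<le> 4 * (\<Sum>x\<in>heavy. mass_var x) / G\<^sup>2"
    using G_pos unfolding G_def by (intro prob_gain_le_half) (auto simp: heavy_def)
  also have "\<dots> \<le> 4 * (M / real s) / (M / 2^18)\<^sup>2"
    using sum_mass_var_le[of heavy] G M
    by (intro frac_le mult_left_mono power_mono) (auto simp: M_def intro: sum_nonneg mass_var_nonneg)
  also have "\<dots> = 2^38 / (real s * M)"
    using M s by (simp add: power2_eq_square field_simps)
  also have "\<dots> \<le> 2^38 / (real s * (\<epsilon>\<^sup>2 / 288))"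
    using M s \<epsilon> by (intro divide_left_mono mult_left_mono mult_pos_pos) auto
  also have "\<dots> = 2^38 * 288 / (real s * \<epsilon>\<^sup>2)" by simp
  also have "\<dots> \<le> 2^38 * 288 / 2^64"
  proof (intro divide_left_mono)
    have "real s * \<epsilon>^4 \<le> real s * \<epsilon>\<^sup>2"
      using \<epsilon> by (intro mult_left_mono power_decreasing) auto
    then show "2^64 \<le> real s * \<epsilon>\<^sup>2" using large_sample by linarith
  qed (use s \<epsilon> in auto)
  finally show "measure_pmf.prob (replicate_pmf s P)
      {xs. gain heavy xs \<le> (\<Sum>x\<in>heavy. cover_excess s q (pmf P x)) / 2} \<le> 1/100"
    by (simp add: G_def)
qed

lemma gain_heavy_ge:
  assumes "(\<Sum>x\<in>heavy. pmf P x) \<le> \<epsilon>\<^sup>2 / 288"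
  shows "- (\<gamma> / 4) \<le> gain heavy xs"
proof -
  have "(\<Sum>x\<in>heavy. cover_tangent s q (pmf P x)) \<le> (\<Sum>x\<in>heavy. 2 * real s * q * pmf P x)"
    using q_bounds by (intro sum_mono cover_tangent_le) auto
  also have "\<dots> = 2 * real s * q * (\<Sum>x\<in>heavy. pmf P x)" by (simp add: sum_distrib_left)
  also have "\<dots> \<le> 2 * real s * q * (\<epsilon>\<^sup>2 / 288)"
    using assms q_bounds by (intro mult_left_mono) auto
  also have "\<dots> = \<gamma> / 4" by (simp add: \<gamma>_def q_def field_simps)
  finally show ?thesis
    unfolding gain_def using sum_nonneg[of "heavy \<inter> set xs" "pmf P"] by simp
qed

text \<open>If the heavy points carry little mass, a low sample mass forces a large deviation on the light
  points alone (\<open>gain_heavy_ge\<close>); otherwise one of the two parts deviates.\<close>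
lemma prob_low_mass_small:
  assumes small: "2^22 * real s \<le> real n"
  shows "measure_pmf.prob (replicate_pmf s P) {xs. measure_pmf.prob P (set xs) \<le> cover_prob s q + 3 * \<tau>}
    \<le> 2/100"
proof -
  let ?low = "{xs. measure_pmf.prob P (set xs) \<le> cover_prob s q + 3 * \<tau>}"
  define GL where "GL = (\<Sum>x\<in>light. cover_excess s q (pmf P x))"
  define GH where "GH = (\<Sum>x\<in>heavy. cover_excess s q (pmf P x))"
  have GL: "\<gamma> \<le> GL" unfolding GL_def by (rule excess_sum_light_ge[OF small])
  have split: "gain light xs + gain heavy xs \<le> 3 * \<tau>"
    if "xs \<in> set_pmf (replicate_pmf s P)" "xs \<in> ?low" for xs
    using low_mass_imp_gain_le[of xs light] that by (simp add: heavy_def light_def subset_iff)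
  show ?thesis
  proof (cases "(\<Sum>x\<in>heavy. pmf P x) \<le> \<epsilon>\<^sup>2 / 288")
    case True
    then have "- (\<gamma> / 4) \<le> gain heavy xs" for xs by (rule gain_heavy_ge)
    then have "measure_pmf.prob (replicate_pmf s P) ?low
        \<le> measure_pmf.prob (replicate_pmf s P) {xs. gain light xs \<le> GL / 2}"
    proof (intro measure_pmf_prob_mono_set_pmf)
      fix xs assume "xs \<in> set_pmf (replicate_pmf s P)" "xs \<in> ?low"
      then have "gain light xs \<le> 3 * \<tau> + \<gamma> / 4" using split \<open>- (\<gamma> / 4) \<le> gain heavy xs\<close> by fastforce
      then show "xs \<in> {xs. gain light xs \<le> GL / 2}" using \<tau>_le GL by simp
    qed
    also have "\<dots> \<le> 1/100" unfolding GL_def by (rule prob_gain_light[OF small])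
    finally show ?thesis by simp
  next
    case False
    have "0 < GH" unfolding GH_def using prob_gain_heavy(1)[OF small] False by simp
    then have "measure_pmf.prob (replicate_pmf s P) ?low
        \<le> measure_pmf.prob (replicate_pmf s P) ({xs. gain light xs \<le> GL / 2} \<union> {xs. gain heavy xs \<le> GH / 2})"
    proof (intro measure_pmf_prob_mono_set_pmf)
      fix xs assume "xs \<in> set_pmf (replicate_pmf s P)" "xs \<in> ?low"
      then have "gain light xs + gain heavy xs \<le> GL / 2 + GH / 2"
        using split \<tau>_le GL \<gamma>_pos \<open>0 < GH\<close> by fastforce
      then show "xs \<in> {xs. gain light xs \<le> GL / 2} \<union> {xs. gain heavy xs \<le> GH / 2}" by auto
    qed
    also have "\<dots> \<le> measure_pmf.prob (replicate_pmf s P) {xs. gain light xs \<le> GL / 2}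
        + measure_pmf.prob (replicate_pmf s P) {xs. gain heavy xs \<le> GH / 2}"
      by (rule measure_Un_le) auto
    also have "\<dots> \<le> 1/100 + 1/100"
      using prob_gain_light[OF small] prob_gain_heavy(2)[OF small] False
      unfolding GL_def GH_def by (intro add_mono) auto
    finally show ?thesis by simp
  qed
qed

lemma prob_low_mass:
  "measure_pmf.prob (replicate_pmf s P) {xs. measure_pmf.prob P (set xs) \<le> cover_prob s q + 3 * \<tau>}
    \<le> 2/100"
  using prob_low_mass_small prob_low_mass_large by (cases "2^22 * real s \<le> real n") force+

lemma prob_many_distinct:
  "measure_pmf.prob (replicate_pmf s P) {xs. real n * (cover_prob s q + \<tau>) \<le> real (card (set xs))}
    \<le> 2^20 / 2^64"
proof -
  have "measure_pmf.prob (replicate_pmf s P) {xs. real n * (cover_prob s q + \<tau>) \<le> real (card (set xs))}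
      \<le> real s / (real n * \<tau>)\<^sup>2"
    using prob_card_set_replicate_pmf_ge[of "{1..n}" P "real n * \<tau>" s] n s supp \<epsilon>
    by (simp add: q_def \<tau>_def distrib_left)
  also have "\<dots> = 2^20 / (real s * \<epsilon>^4)"
    using n s \<epsilon> by (simp add: \<tau>_def power2_eq_square power4_eq_xxxx field_simps)
  also have "\<dots> \<le> 2^20 / 2^64"
    using large_sample by (intro divide_left_mono) auto
  finally show ?thesis .
qed

lemma prob_good_sample:
  "1 - 2/100 - 2^20 / 2^64 \<le> measure_pmf.prob (replicate_pmf s P)
     {xs. real (card (set xs)) < real n * (cover_prob s q + \<tau>) \<and> cover_prob s q + 3 * \<tau> < measure_pmf.prob P (set xs)}"
    (is "_ \<le> measure_pmf.prob _ ?good")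
proof -
  let ?M = "replicate_pmf s P"
  let ?many = "{xs. real n * (cover_prob s q + \<tau>) \<le> real (card (set xs))}"
  let ?low = "{xs. measure_pmf.prob P (set xs) \<le> cover_prob s q + 3 * \<tau>}"
  have "measure_pmf.prob ?M (- ?good) \<le> measure_pmf.prob ?M (?many \<union> ?low)"
    by (intro measure_pmf.finite_measure_mono) auto
  also have "\<dots> \<le> measure_pmf.prob ?M ?many + measure_pmf.prob ?M ?low"
    by (rule measure_Un_le) auto
  finally show ?thesis
    using prob_many_distinct prob_low_mass measure_pmf.prob_compl[of ?good ?M]
    by (simp add: Compl_eq_Diff_UNIV)
qed

lemma exp_tail_le:
  assumes k: "2 \<le> k" and m: "2^26 * real n * ln (real k) / (real s * \<epsilon>^4) \<le> real m"
    and p: "0 < p" "p \<le> cover_prob s q + 3 * \<tau>"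
  shows "exp (- real m * \<tau>\<^sup>2 / (4 * p)) \<le> 1 / real k ^ 8"
proof -
  have "cover_prob s q \<le> real s / real n" using cover_prob_le[of q s] q_bounds by (simp add: q_def)
  moreover have "3 * \<tau> \<le> real s / real n"
  proof -
    have "\<epsilon>\<^sup>2 \<le> 1" using \<epsilon> by (simp add: power_le_one)
    then have "real s * (3 * \<epsilon>\<^sup>2) \<le> real s * 1024" by (intro mult_left_mono) auto
    then show ?thesis using n by (simp add: \<tau>_def field_simps)
  qed
  ultimately have p2: "p \<le> 2 * real s / real n" using p by simp
  have "8 * ln (real k) = 2^26 * real n * ln (real k) / (real s * \<epsilon>^4) * \<tau>\<^sup>2 / (4 * (2 * real s / real n))"
    using s n \<epsilon> by (simp add: \<tau>_def power2_eq_square power4_eq_xxxx field_simps)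
  also have "\<dots> \<le> real m * \<tau>\<^sup>2 / (4 * (2 * real s / real n))"
    using m s n by (intro divide_right_mono mult_right_mono) auto
  also have "\<dots> \<le> real m * \<tau>\<^sup>2 / (4 * p)"
    using p p2 s n by (intro divide_left_mono) auto
  finally have "exp (- real m * \<tau>\<^sup>2 / (4 * p)) \<le> exp (- (8 * ln (real k)))" by simp
  also have "\<dots> = 1 / real k ^ 8"
    using k exp_of_nat_mult[of 8 "ln (real k)"] by (simp add: exp_minus field_simps)
  finally show ?thesis .
qed

lemma prob_second_stage_exact:
  fixes D :: "nat \<Rightarrow> nat pmf" and chi :: "nat set"
  assumes k: "2 \<le> k" and m: "2^26 * real n * ln (real k) / (real s * \<epsilon>^4) \<le> real m"
    and chi: "chi \<subseteq> {1..k}" "\<forall>i\<in>chi. D i = P" "\<forall>i\<in>{1..k} - chi. D i = unif n"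
    and xs: "xs \<in> set_pmf (replicate_pmf s P)" "real (card (set xs)) < real n * (cover_prob s q + \<tau>)"
      "cover_prob s q + 3 * \<tau> < measure_pmf.prob P (set xs)"
  shows "127/128 \<le> measure_pmf.prob (Pi_pmf {1..k} [] (\<lambda>j. replicate_pmf m (D j)))
      {Xs. {j\<in>{1..k}. cover_prob s q + 2 * \<tau> \<le> real (hits (set xs) (Xs j)) / real m} = chi}"
proof -
  have \<tau>: "0 < \<tau>" using s n \<epsilon> by (simp add: \<tau>_def)
  have F: "0 \<le> cover_prob s q" using q_bounds by (intro cover_prob_nonneg) auto
  have "0 < 2^26 * real n * ln (real k) / (real s * \<epsilon>^4)" using n s \<epsilon> k by simp
  then have "0 < m" using m by simp
  have "set xs \<subseteq> {1..n}" using xs(1) supp by (auto simp: set_replicate_pmf)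
  then have unif: "measure_pmf.prob (unif n) (set xs) < cover_prob s q + \<tau>"
    using xs(2) n by (simp add: unif_def measure_pmf_of_set Int_absorb1 field_simps)
  have "1 - real (card {1..k}) * (1 / real k ^ 8)
      \<le> measure_pmf.prob (Pi_pmf {1..k} [] (\<lambda>j. replicate_pmf m (D j)))
      {Xs. {j\<in>{1..k}. cover_prob s q + 2 * \<tau> \<le> real (hits (set xs) (Xs j)) / real m} = chi}"
    using chi xs(3) unif \<tau> F \<open>0 < m\<close>
    by (intro prob_threshold_tests_exact[where pl = "cover_prob s q + 3 * \<tau>" and pu = "cover_prob s q + \<tau>"
          and t = \<tau>] exp_tail_le[OF k m]) auto
  moreover have "real k * (1 / real k ^ 8) \<le> 1/128"
  proof -
    have "real k * 2 ^ 7 \<le> real k * real k ^ 7" using k by (intro mult_left_mono power_mono) auto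
    then show ?thesis using k by (simp add: field_simps power_Suc[symmetric] del: power_Suc)
  qed
  ultimately show ?thesis by simp
qed

end

section \<open>The ESW tester\<close>

lemma k_le_k_ln_k:
  assumes "2 \<le> k"
  shows "real k \<le> 2 * (real k * ln (real k))"
proof -
  have "ln 2 \<le> ln (real k)" using assms by simp
  then have "2/3 \<le> ln (real k)" using ln2_ge_two_thirds by linarith
  then show ?thesis using mult_left_mono[of "2/3" "ln (real k)" "real k"] by simp
qed

lemma one_le_k_ln_k:
  assumes "2 \<le> k"
  shows "1 \<le> real k * ln (real k)"
proof -
  have "2 \<le> real k" using assms by simp
  then show ?thesis using k_le_k_ln_k[OF assms] by linarith
qed

lemma esw_s1_bounds:
  fixes n k :: nat and \<epsilon> :: real
  assumes k: "2 \<le> k" and n: "1 \<le> n" and \<epsilon>: "0 < \<epsilon>" "\<epsilon> \<le> 1"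
  defines "A \<equiv> sqrt (real n * real k * ln (real k)) / \<epsilon>\<^sup>2"
  shows "1 \<le> A" and "min (real n) A \<le> real (esw_s1 n k \<epsilon>)"
    and "real (esw_s1 n k \<epsilon>) \<le> min (real n) A + 1" and "1 \<le> esw_s1 n k \<epsilon>" and "esw_s1 n k \<epsilon> \<le> n"
proof -
  have "1 * 1 \<le> real n * (real k * ln (real k))"
    using n one_le_k_ln_k[OF k] by (intro mult_mono) auto
  then have "\<epsilon>\<^sup>2 \<le> sqrt (real n * real k * ln (real k))"
    using \<epsilon> by (simp add: mult.assoc power_le_one order.trans[OF _ real_sqrt_ge_one])
  then show A: "1 \<le> A" using \<epsilon> by (simp add: A_def le_divide_eq)
  have s: "real (esw_s1 n k \<epsilon>) = real_of_int \<lceil>min (real n) A\<rceil>"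
    using A n by (simp add: esw_s1_def A_def)
  show "min (real n) A \<le> real (esw_s1 n k \<epsilon>)" "real (esw_s1 n k \<epsilon>) \<le> min (real n) A + 1"
    unfolding s by linarith+
  have "1 \<le> \<lceil>min (real n) A\<rceil>" "\<lceil>min (real n) A\<rceil> \<le> int n"
    using A n by (simp_all add: le_ceiling_iff ceiling_le_iff)
  then show "1 \<le> esw_s1 n k \<epsilon>" "esw_s1 n k \<epsilon> \<le> n"
    unfolding esw_s1_def A_def[symmetric] by linarith+
qed

lemma esw_s1_large:
  fixes n k :: nat and \<epsilon> :: real
  assumes k: "2 \<le> k" and n: "1 \<le> n" and \<epsilon>: "0 < \<epsilon>" "\<epsilon> \<le> 1" and large: "2^128 \<le> real n * \<epsilon>^4"
  shows "2^64 \<le> real (esw_s1 n k \<epsilon>) * \<epsilon>^4" and "real n \<le> (real (esw_s1 n k \<epsilon>))\<^sup>2 * \<epsilon>\<^sup>2"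
proof -
  define A where "A = sqrt (real n * real k * ln (real k)) / \<epsilon>\<^sup>2"
  define s where "s = real (esw_s1 n k \<epsilon>)"
  have A1: "1 \<le> A" and s: "min (real n) A \<le> s"
    using esw_s1_bounds[OF k n \<epsilon>] by (simp_all add: A_def s_def)
  have kl: "1 \<le> real k * ln (real k)" by (rule one_le_k_ln_k[OF k])
  have \<epsilon>4: "\<epsilon>^4 \<le> \<epsilon>\<^sup>2" using \<epsilon> by (intro power_decreasing) auto
  have "sqrt (\<epsilon>^4) = \<epsilon>\<^sup>2"
    using real_sqrt_abs[of "\<epsilon>\<^sup>2"] by (simp flip: power_mult)
  then have "2^64 \<le> sqrt (real n) * \<epsilon>\<^sup>2"
    using real_sqrt_le_mono[OF large] by (simp add: real_sqrt_mult power_mult[symmetric])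
  also have "\<dots> \<le> sqrt (real n * real k * ln (real k)) * \<epsilon>\<^sup>2"
  proof (intro mult_right_mono real_sqrt_le_mono)
    show "real n \<le> real n * real k * ln (real k)"
      using mult_left_mono[OF kl, of "real n"] by (simp add: mult.assoc)
  qed auto
  also have "\<dots> = A * \<epsilon>^4"
    using \<epsilon> by (simp add: A_def power2_eq_square power4_eq_xxxx)
  finally have "2^64 \<le> A * \<epsilon>^4" .
  then have "2^64 \<le> min (real n) A * \<epsilon>^4" using large \<epsilon>4 by (simp add: min_def)
  also have "\<dots> \<le> s * \<epsilon>^4" using s by (intro mult_right_mono) auto
  finally show "2^64 \<le> real (esw_s1 n k \<epsilon>) * \<epsilon>^4" by (simp add: s_def)
  have "A\<^sup>2 * \<epsilon>\<^sup>2 = real n * (real k * ln (real k)) / \<epsilon>\<^sup>2"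
    using \<epsilon> kl by (simp add: A_def power_divide power4_eq_xxxx power2_eq_square mult.assoc)
  moreover have "\<epsilon>\<^sup>2 \<le> real k * ln (real k)" using \<epsilon> kl power_le_one[of \<epsilon> 2] by linarith
  ultimately have "real n \<le> A\<^sup>2 * \<epsilon>\<^sup>2"
    using \<epsilon> n by (simp add: le_divide_eq mult_left_mono)
  moreover have "real n \<le> (real n)\<^sup>2 * \<epsilon>\<^sup>2"
  proof -
    have "real n * 1 \<le> real n * (real n * \<epsilon>\<^sup>2)"
      using large mult_left_mono[OF \<epsilon>4, of "real n"] by (intro mult_left_mono) auto
    then show ?thesis by (simp add: power2_eq_square mult.assoc)
  qed
  ultimately have "real n \<le> (min (real n) A)\<^sup>2 * \<epsilon>\<^sup>2" by (simp add: min_def)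
  also have "\<dots> \<le> s\<^sup>2 * \<epsilon>\<^sup>2" using s A1 by (intro mult_right_mono power_mono) auto
  finally show "real n \<le> (real (esw_s1 n k \<epsilon>))\<^sup>2 * \<epsilon>\<^sup>2" by (simp add: s_def)
qed

lemma n_eps4_ge:
  assumes n: "1 \<le> n" and c0: "0 < c0" and \<epsilon>: "c0 * real n powr (-1/4) \<le> \<epsilon>"
  shows "c0^4 \<le> real n * \<epsilon>^4"
proof -
  have "(real n powr (-1/4))^4 = real n powr (real 4 * (-1/4))"
    using n by (subst powr_power) auto
  also have "\<dots> = inverse (real n)" using n by (simp add: powr_minus)
  finally have "c0^4 * inverse (real n) = (c0 * real n powr (-1/4))^4" by (simp add: power_mult_distrib)
  also have "\<dots> \<le> \<epsilon>^4" using \<epsilon> c0 by (intro power_mono) auto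
  finally show ?thesis using n by (simp add: field_simps)
qed

lemma esw_tester_eq_bind:
  "esw_tester c c' n k \<epsilon> P D = bind_pmf (replicate_pmf (esw_s1 n k \<epsilon>) P) (\<lambda>xs.
     map_pmf (\<lambda>Xs. {j\<in>{1..k}. 1 - (1 - 1 / real n) ^ esw_s1 n k \<epsilon> + 2 * esw_tau c' n k \<epsilon>
                 \<le> real (hits (set xs) (Xs j)) / real (esw_s2 c n k \<epsilon>)})
       (Pi_pmf {1..k} [] (\<lambda>j. replicate_pmf (esw_s2 c n k \<epsilon>) (D j))))"
  by (simp add: esw_tester_def Let_def hits_def map_pmf_def)

lemma prob_esw_tester_correct:
  fixes k n :: nat and \<epsilon> :: real and P :: "nat pmf" and D :: "nat \<Rightarrow> nat pmf" and chi :: "nat set"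
  assumes k: "2 \<le> k" and n: "1 \<le> n" and \<epsilon>: "0 < \<epsilon>" "\<epsilon> \<le> 1"
    and \<epsilon>_ge: "2^32 * real n powr (-1/4) \<le> \<epsilon>"
    and supp: "set_pmf P \<subseteq> {1..n}" and far: "\<epsilon> \<le> dTV n P (unif n)"
    and chi: "chi \<subseteq> {1..k}" "\<forall>i\<in>chi. D i = P" "\<forall>i\<in>{1..k} - chi. D i = unif n"
  shows "8/9 \<le> measure_pmf.prob (esw_tester (2^26) (1/1024) n k \<epsilon> P D) {chi}"
proof -
  define s where "s = esw_s1 n k \<epsilon>"
  define m where "m = esw_s2 (2^26) n k \<epsilon>"
  have large: "2^128 \<le> real n * \<epsilon>^4" using n_eps4_ge[OF n _ \<epsilon>_ge] by simp
  moreover have "real n * \<epsilon>^4 \<le> real n" using \<epsilon> by (simp add: power_le_one mult_left_le)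
  moreover have "(2::real) \<le> 2^128" by simp
  ultimately have "2 \<le> real n" by linarith
  then have "2 \<le> n" by simp
  then interpret far_from_uniform P n s \<epsilon>
    using esw_s1_bounds[OF k n \<epsilon>] esw_s1_large[OF k n \<epsilon> large] supp \<epsilon> far
    by unfold_locales (auto simp: s_def)
  have thr: "1 - (1 - 1 / real n) ^ s + 2 * esw_tau (1/1024) n k \<epsilon> = cover_prob s q + 2 * \<tau>"
    by (simp add: cover_prob_def q_def \<tau>_def esw_tau_def flip: s_def)
  have m_ge: "2^26 * real n * ln (real k) / (real s * \<epsilon>^4) \<le> real m"
    unfolding m_def esw_s2_def s_def[symmetric] by linarith
  have "127/128 * (1 - 2/100 - 2^20 / 2^64) \<le> 127/128 * measure_pmf.prob (replicate_pmf s P)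
     {xs. real (card (set xs)) < real n * (cover_prob s q + \<tau>) \<and> cover_prob s q + 3 * \<tau> < measure_pmf.prob P (set xs)}"
    using prob_good_sample by (intro mult_left_mono) auto
  also have "\<dots> \<le> measure_pmf.prob (esw_tester (2^26) (1/1024) n k \<epsilon> P D) {chi}"
    unfolding esw_tester_eq_bind s_def[symmetric] m_def[symmetric] thr
  proof (rule prob_bind_pmf_ge)
    fix xs assume "xs \<in> set_pmf (replicate_pmf s P)" "xs \<in> {xs. real (card (set xs)) < real n * (cover_prob s q + \<tau>)
      \<and> cover_prob s q + 3 * \<tau> < measure_pmf.prob P (set xs)}"
    then show "127/128 \<le> measure_pmf.prob (map_pmf (\<lambda>Xs. {j\<in>{1..k}. cover_prob s q + 2 * \<tau>
        \<le> real (hits (set xs) (Xs j)) / real m}) (Pi_pmf {1..k} [] (\<lambda>j. replicate_pmf m (D j)))) {chi}"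
      using prob_second_stage_exact[OF k m_ge chi, of xs] by (simp add: vimage_def)
  qed simp
  finally show ?thesis by simp
qed

lemma esw_s2_le:
  assumes "1 \<le> k" "0 \<le> c"
  shows "real (esw_s2 c n k \<epsilon>) \<le> c * real n * ln (real k) / (real (esw_s1 n k \<epsilon>) * \<epsilon>^4) + 1"
proof -
  have "0 \<le> c * real n * ln (real k) / (real (esw_s1 n k \<epsilon>) * \<epsilon>^4)" using assms by simp
  then show ?thesis unfolding esw_s2_def by linarith
qed

lemma sqrt_n_k_ln_k_sq:
  assumes "2 \<le> k"
  shows "(sqrt (real n * real k * ln (real k)) / \<epsilon>\<^sup>2)\<^sup>2 = real n * (real k * ln (real k) / \<epsilon>^4)"
proof -
  have "0 \<le> real n * real k * ln (real k)" using one_le_k_ln_k[OF assms] by (simp add: mult.assoc)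
  then show ?thesis by (simp add: power_divide power4_eq_xxxx power2_eq_square mult.assoc)
qed

lemma k_le_k_ln_k_div:
  assumes k: "2 \<le> k" and \<epsilon>: "0 < \<epsilon>" "\<epsilon> \<le> 1"
  shows "real k \<le> 2 * (real k * ln (real k) / \<epsilon>^4)"
proof -
  have "real k * ln (real k) * \<epsilon>^4 \<le> real k * ln (real k) * 1"
    using one_le_k_ln_k[OF k] \<epsilon> by (intro mult_left_mono) (auto simp: power_le_one)
  then have "real k * ln (real k) \<le> real k * ln (real k) / \<epsilon>^4" using \<epsilon> by (simp add: le_divide_eq)
  then show ?thesis using k_le_k_ln_k[OF k] by linarith
qed

lemma esw_sample_complexity_large_n:
  assumes k: "2 \<le> k" and n: "1 \<le> n" and \<epsilon>: "0 < \<epsilon>" "\<epsilon> \<le> 1"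
    and large: "real k * ln (real k) / \<epsilon>^4 \<le> real n"
  shows "real (esw_s1 n k \<epsilon> + k * esw_s2 (2^26) n k \<epsilon>)
    \<le> (2^26 + 4) * sqrt (real n * real k * ln (real k)) / \<epsilon>\<^sup>2"
proof -
  define A where "A = sqrt (real n * real k * ln (real k)) / \<epsilon>\<^sup>2"
  define B where "B = real k * ln (real k) / \<epsilon>^4"
  define s where "s = real (esw_s1 n k \<epsilon>)"
  have A1: "1 \<le> A" and s: "min (real n) A \<le> s" "s \<le> min (real n) A + 1"
    using esw_s1_bounds[OF k n \<epsilon>] by (simp_all add: A_def s_def)
  have AB: "A\<^sup>2 = real n * B" unfolding A_def B_def by (rule sqrt_n_k_ln_k_sq[OF k])
  have B: "real k \<le> 2 * B" "0 < B"
    using k_le_k_ln_k_div[OF k \<epsilon>] k unfolding B_def by auto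
  have nB: "B \<le> real n" using large by (simp add: B_def)
  have "A\<^sup>2 \<le> (real n)\<^sup>2" using AB mult_left_mono[OF nB, of "real n"] by (simp add: power2_eq_square)
  then have An: "A \<le> real n" using A1 by (simp add: power2_le_iff_abs_le)
  have "B\<^sup>2 \<le> A\<^sup>2" using AB mult_right_mono[OF nB, of B] B by (simp add: power2_eq_square)
  then have BA: "B \<le> A" using A1 B by (simp add: power2_le_iff_abs_le)
  have sA: "A \<le> s" "s \<le> 2 * A" using s An A1 by auto
  have "real k * real (esw_s2 (2^26) n k \<epsilon>) \<le> real k * (2^26 * real n * ln (real k) / (s * \<epsilon>^4) + 1)"
    using esw_s2_le[of k "2^26" n \<epsilon>] k by (intro mult_left_mono) (auto simp: s_def)
  also have "\<dots> \<le> real k * (2^26 * real n * ln (real k) / (A * \<epsilon>^4) + 1)"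
    using sA A1 \<epsilon> k by (intro mult_left_mono add_right_mono divide_left_mono mult_right_mono) auto
  also have "\<dots> = 2^26 * (real n * B) / A + real k"
    using A1 \<epsilon> by (simp add: B_def field_simps)
  also have "real n * B = A * A" using AB by (simp add: power2_eq_square)
  then have "2^26 * (real n * B) / A + real k = 2^26 * A + real k" using A1 by simp
  finally have "s + real k * real (esw_s2 (2^26) n k \<epsilon>) \<le> (2^26 + 4) * A"
    using sA B BA by (simp add: distrib_right)
  then show ?thesis by (simp add: A_def s_def)
qed

lemma esw_sample_complexity_small_n:
  assumes k: "2 \<le> k" and n: "1 \<le> n" and \<epsilon>: "0 < \<epsilon>" "\<epsilon> \<le> 1"
    and small: "real n \<le> real k * ln (real k) / \<epsilon>^4"
  shows "real (esw_s1 n k \<epsilon> + k * esw_s2 (2^26) n k \<epsilon>) \<le> (2^26 + 4) * real k * ln (real k) / \<epsilon>^4"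
proof -
  define A where "A = sqrt (real n * real k * ln (real k)) / \<epsilon>\<^sup>2"
  define B where "B = real k * ln (real k) / \<epsilon>^4"
  have A1: "1 \<le> A" and s: "min (real n) A \<le> real (esw_s1 n k \<epsilon>)" "esw_s1 n k \<epsilon> \<le> n"
    using esw_s1_bounds[OF k n \<epsilon>] by (simp_all add: A_def)
  have AB: "A\<^sup>2 = real n * B" unfolding A_def B_def by (rule sqrt_n_k_ln_k_sq[OF k])
  have B: "real k \<le> 2 * B" using k_le_k_ln_k_div[OF k \<epsilon>] by (simp add: B_def)
  have nB: "real n \<le> B" using small by (simp add: B_def)
  have "(real n)\<^sup>2 \<le> A\<^sup>2" using AB mult_left_mono[OF nB, of "real n"] by (simp add: power2_eq_square)
  then have "real n \<le> A" using A1 by (simp add: power2_le_iff_abs_le)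
  then have sn: "real (esw_s1 n k \<epsilon>) = real n" using s by simp
  have "real k * real (esw_s2 (2^26) n k \<epsilon>) \<le> real k * (2^26 * real n * ln (real k) / (real n * \<epsilon>^4) + 1)"
    using esw_s2_le[of k "2^26" n \<epsilon>] k sn by (intro mult_left_mono) auto
  also have "\<dots> = 2^26 * B + real k" using n \<epsilon> by (simp add: B_def field_simps)
  finally have "real (esw_s1 n k \<epsilon>) + real k * real (esw_s2 (2^26) n k \<epsilon>) \<le> (2^26 + 4) * B"
    using sn nB B n by (simp add: distrib_right)
  then show ?thesis by (simp add: B_def)
qed

theorem lemma3p1:
  shows "\<exists>c0>0. \<exists>c>0. \<exists>c'>0. \<exists>C>0.
    \<forall>(k::nat) (n::nat) (\<epsilon>::real) (P::nat pmf) (D::nat \<Rightarrow> nat pmf) (chi::nat set).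
      k \<ge> 2 \<longrightarrow> n \<ge> 1 \<longrightarrow> 0 < \<epsilon> \<longrightarrow> \<epsilon> \<le> 1 \<longrightarrow> \<epsilon> \<ge> c0 * real n powr (-1/4) \<longrightarrow>
      set_pmf P \<subseteq> {1..n} \<longrightarrow> dTV n P (unif n) \<ge> \<epsilon> \<longrightarrow>
      chi \<subseteq> {1..k} \<longrightarrow> (\<forall>i\<in>chi. D i = P) \<longrightarrow> (\<forall>i\<in>{1..k} - chi. D i = unif n) \<longrightarrow>
      measure_pmf.prob (esw_tester c c' n k \<epsilon> P D) {chi} \<ge> 8/9 \<and>
      (real n \<ge> real k * ln (real k) / \<epsilon>^4 \<longrightarrow>
         real (esw_s1 n k \<epsilon> + k * esw_s2 c n k \<epsilon>) \<le> C * sqrt (real n * real k * ln (real k)) / \<epsilon>^2) \<and>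
      (real n \<le> real k * ln (real k) / \<epsilon>^4 \<longrightarrow>
         real (esw_s1 n k \<epsilon> + k * esw_s2 c n k \<epsilon>) \<le> C * real k * ln (real k) / \<epsilon>^4)"
proof (rule exI[of _ "2^32"], rule conjI, simp, rule exI[of _ "2^26"], rule conjI, simp,
    rule exI[of _ "1/1024"], rule conjI, simp, rule exI[of _ "2^26 + 4"], rule conjI, simp,
    intro allI impI conjI)
  fix k n :: nat and \<epsilon> :: real and P :: "nat pmf" and D :: "nat \<Rightarrow> nat pmf" and chi :: "nat set"
  assume k: "2 \<le> k" and n: "1 \<le> n" and \<epsilon>: "0 < \<epsilon>" "\<epsilon> \<le> 1"
    and \<epsilon>_ge: "2^32 * real n powr (-1/4) \<le> \<epsilon>" and supp: "set_pmf P \<subseteq> {1..n}"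
    and far: "\<epsilon> \<le> dTV n P (unif n)" and chi: "chi \<subseteq> {1..k}" "\<forall>i\<in>chi. D i = P"
    "\<forall>i\<in>{1..k} - chi. D i = unif n"
  show "8/9 \<le> measure_pmf.prob (esw_tester (2^26) (1/1024) n k \<epsilon> P D) {chi}"
    by (rule prob_esw_tester_correct[OF k n \<epsilon> \<epsilon>_ge supp far chi])
  show "real (esw_s1 n k \<epsilon> + k * esw_s2 (2^26) n k \<epsilon>)
      \<le> (2^26 + 4) * sqrt (real n * real k * ln (real k)) / \<epsilon>^2"
    if "real k * ln (real k) / \<epsilon>^4 \<le> real n"
    using esw_sample_complexity_large_n[OF k n \<epsilon> that] .
  show "real (esw_s1 n k \<epsilon> + k * esw_s2 (2^26) n k \<epsilon>) \<le> (2^26 + 4) * real k * ln (real k) / \<epsilon>^4"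
    if "real n \<le> real k * ln (real k) / \<epsilon>^4"
    using esw_sample_complexity_small_n[OF k n \<epsilon> that] .
qed

end
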